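(* Let $\sigma:\mathcal A^*\to\mathcal B^*$ be a non-erasing monoid morphism between free monoids over finite alphabets (i.e. $\sigma(a)$ is non-empty for every $a\in\mathcal A$), let $X\subseteq \mathcal A^{\mathbb Z}$ be a subshift, and let $Y\subseteq\mathcal B^{\mathbb Z}$ be the subshift generated by $\sigma(X)$, i.e. the smallest subshift containing $\sigma(x)$ for all $x\in X$. For $\mu\in\mathcal M(X)$ define the measure $\sigma_{\mathcal M}(\mu)$ on $\mathcal B^{\mathbb Z}$ by $$\sigma_{\mathcal M}(\mu)(B) = \int_X \#\{k : 0\le k<|\sigma(x_1)|,\ T^{k}\sigma(x)\in B\}\, d\mu(x)$$ for Borel sets $B\subseteq \mathcal B^{\mathbb Z}$. Then: (1) $\sigma_{\mathcal M}(\mu)$ is an invariant measure on $Y$, so $\sigma_{\mathcal M}:\mathcal M(X)\to\mathcal M(Y)$ is a well-defined map; (2) $\sigma_{\mathcal M}$ is surjective; (3) $\sigma_{\mathcal M}$ is functorial: if $\sigma':\mathcal C^*\to\mathcal A^*$ is a second non-erasing monoid morphism, $X'\subseteq\mathcal C^{\mathbb Z}$ is a subshift and $X$ is the subshift generated by $\sigma'(X')$, then $(\sigma\circ\sigma')_{\mathcal M} = \sigma_{\mathcal M}\circ\sigma'_{\mathcal M}$ as maps $\mathcal M(X')\to\mathcal M(Y)$.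
   Context: For a finite alphabet $\mathcal A$, $\mathcal A^{\mathbb Z}$ carries the product topology and the shift map $T$, $(Tx)_i = x_{i+1}$. A subshift is a closed set $X$ with $T(X)=X$; $\mathcal M(X)$ denotes the cone of finite $T$-invariant Borel measures on $\mathcal A^{\mathbb Z}$ with support contained in $X$. For a non-erasing morphism $\sigma$ and $x=(x_i)_{i\in\mathbb Z}\in\mathcal A^{\mathbb Z}$, $\sigma(x)\in\mathcal B^{\mathbb Z}$ denotes the biinfinite concatenation $\cdots\sigma(x_{-1})\sigma(x_0)\sigma(x_1)\sigma(x_2)\cdots$, positioned so that the word $\sigma(x_1)$ occupies the coordinates $1,\dots,|\sigma(x_1)|$. (Note that $\sigma_{\mathcal M}(\mu)$ need not be a probability measure even if $\mu$ is.) *)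

theory Defs
  imports "HOL-Analysis.Analysis" "HOL-Probability.Probability"
begin

definition shift :: "(int \<Rightarrow> 'a) \<Rightarrow> (int \<Rightarrow> 'a)" where
  "shift x = (\<lambda>i. x (i + 1))"

definition shift_top :: "(int \<Rightarrow> 'a) topology" where
  "shift_top = product_topology (\<lambda>_. discrete_topology UNIV) UNIV"

definition shift_borel :: "(int \<Rightarrow> 'a) measure" where
  "shift_borel = sigma (topspace shift_top) {U. openin shift_top U}"

definition subshift :: "(int \<Rightarrow> 'a) set \<Rightarrow> bool" where
  "subshift X \<longleftrightarrow> closedin shift_top X \<and> shift ` X = X"

text \<open>Finite shift-invariant Borel measures with support contained in X
  (for closed X this means the complement of X is a null set).\<close>

definition inv_measures :: "(int \<Rightarrow> 'a) set \<Rightarrow> (int \<Rightarrow> 'a) measure set" where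
  "inv_measures X = {M. sets M = sets shift_borel \<and> finite_measure M \<and>
     (\<forall>B \<in> sets shift_borel. emeasure M (shift -` B) = emeasure M B) \<and>
     emeasure M (UNIV - X) = 0}"

text \<open>Non-erasing morphisms, given by the images of letters.\<close>

definition non_erasing :: "('a \<Rightarrow> 'b list) \<Rightarrow> bool" where
  "non_erasing \<sigma> \<longleftrightarrow> (\<forall>a. \<sigma> a \<noteq> [])"

definition morph_comp :: "('a \<Rightarrow> 'b list) \<Rightarrow> ('c \<Rightarrow> 'a list) \<Rightarrow> ('c \<Rightarrow> 'b list)" where
  "morph_comp \<sigma> \<sigma>' = (\<lambda>c. concat (map \<sigma> (\<sigma>' c)))"

text \<open>Cumulative lengths: the word sigma(x_n) occupies the coordinates
  cumlen (n-1) + 1, ..., cumlen n, with cumlen 0 = 0.\<close>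

definition cumlen :: "('a \<Rightarrow> 'b list) \<Rightarrow> (int \<Rightarrow> 'a) \<Rightarrow> int \<Rightarrow> int" where
  "cumlen \<sigma> x n = (if n \<ge> 0 then (\<Sum>k\<in>{1..n}. int (length (\<sigma> (x k))))
                   else - (\<Sum>k\<in>{n+1..0}. int (length (\<sigma> (x k)))))"

definition subst_seq :: "('a \<Rightarrow> 'b list) \<Rightarrow> (int \<Rightarrow> 'a) \<Rightarrow> (int \<Rightarrow> 'b)" where
  "subst_seq \<sigma> x i =
     (let n = (THE n. cumlen \<sigma> x (n - 1) < i \<and> i \<le> cumlen \<sigma> x n)
      in \<sigma> (x n) ! nat (i - cumlen \<sigma> x (n - 1) - 1))"

definition generated_subshift :: "('a \<Rightarrow> 'b list) \<Rightarrow> (int \<Rightarrow> 'a) set \<Rightarrow> (int \<Rightarrow> 'b) set" where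
  "generated_subshift \<sigma> X = \<Inter>{Z. subshift Z \<and> subst_seq \<sigma> ` X \<subseteq> Z}"

definition push_count :: "('a \<Rightarrow> 'b list) \<Rightarrow> (int \<Rightarrow> 'b) set \<Rightarrow> (int \<Rightarrow> 'a) \<Rightarrow> ennreal" where
  "push_count \<sigma> B x =
     of_nat (card {k. k < length (\<sigma> (x 1)) \<and> (shift ^^ k) (subst_seq \<sigma> x) \<in> B})"

definition push_measure ::
  "('a \<Rightarrow> 'b list) \<Rightarrow> (int \<Rightarrow> 'a) set \<Rightarrow> (int \<Rightarrow> 'a) measure \<Rightarrow> (int \<Rightarrow> 'b) measure" where
  "push_measure \<sigma> X \<mu> =
     measure_of UNIV (sets shift_borel) (\<lambda>B. \<integral>\<^sup>+ x \<in> X. push_count \<sigma> B x \<partial>\<mu>)"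

end

theory Submission
  imports Defs "HOL-Library.Diagonal_Subsequence"
begin

text \<open>The measure \<open>\<sigma>\<^sub>M(\<mu>)\<close> integrates over \<open>X\<close> the number of positions \<open>k\<close> in the block
  \<open>\<sigma>(x\<^sub>1)\<close> at which \<open>T\<^sup>k \<sigma>(x)\<close> lies in \<open>B\<close>. Replacing \<open>x\<close> by \<open>T x\<close> moves this window
  of positions by \<open>|\<sigma>(x\<^sub>1)|\<close>, so the invariance of \<open>\<mu>\<close> carries over to \<open>\<sigma>\<^sub>M(\<mu>)\<close>; grouping
  the positions of \<open>\<sigma>(\<sigma>'(x\<^sub>1))\<close> by the letters of \<open>\<sigma>'(x\<^sub>1)\<close> gives functoriality.
  For surjectivity, every point of the generated subshift is \<open>T\<^sup>k \<sigma>(x)\<close> with \<open>x \<in> X\<close> and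
  \<open>k < |\<sigma>(x\<^sub>1)|\<close>, by compactness. Weighted orbit averages on \<open>X\<close> built from such
  representations push forward to better and better approximations of a given \<open>\<nu>\<close>; a limit
  along a diagonal subsequence exists on the countable algebra of sets depending on finitely many
  coordinates, and it extends, again by compactness, to an invariant measure \<open>\<mu>\<close> with
  \<open>\<sigma>\<^sub>M(\<mu>) = \<nu>\<close>.\<close>

section \<open>Cumulative lengths and the substituted sequence\<close>

abbreviation block_length :: "('a \<Rightarrow> 'b list) \<Rightarrow> (int \<Rightarrow> 'a) \<Rightarrow> int \<Rightarrow> int" where
  "block_length \<sigma> x n \<equiv> int (length (\<sigma> (x n)))"

lemma cumlen_0 [simp]: "cumlen \<sigma> x 0 = 0"
  by (simp add: cumlen_def)

lemma cumlen_diff: "cumlen \<sigma> x n - cumlen \<sigma> x (n - 1) = block_length \<sigma> x n"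
proof -
  consider "n \<ge> 1" | "n = 0" | "n < 0" by linarith
  then show ?thesis
  proof cases
    case 1
    then have "{1..n} = insert n {1..n - 1}" by auto
    with 1 show ?thesis by (simp add: cumlen_def)
  next
    case 3
    then have "{n..0} = insert n {n + 1..0}" by auto
    with 3 show ?thesis by (simp add: cumlen_def)
  qed (simp add: cumlen_def)
qed

lemma cumlen_step: "cumlen \<sigma> x n = cumlen \<sigma> x (n - 1) + block_length \<sigma> x n"
  using cumlen_diff[of \<sigma> x n] by simp

lemma int_fun_eq_by_differences:
  fixes f g :: "int \<Rightarrow> int"
  assumes "f 0 = g 0" and "\<And>n. f n - f (n - 1) = g n - g (n - 1)"
  shows "f = g"
proof
  fix n :: int
  show "f n = g n"
  proof (induction n rule: int_induct[where k = 0])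
    case base then show ?case using assms(1) by simp
  next
    case (step1 i) then show ?case using assms(2)[of "i + 1"] by simp
  next
    case (step2 i) then show ?case using assms(2)[of i] by simp
  qed
qed

lemma block_length_ge_1: "non_erasing \<sigma> \<Longrightarrow> block_length \<sigma> x n \<ge> 1"
  by (simp add: non_erasing_def Suc_le_eq)

lemma cumlen_strict_mono:
  assumes ne: "non_erasing \<sigma>" and "a < b"
  shows "cumlen \<sigma> x a < cumlen \<sigma> x b"
  using \<open>a < b\<close>
proof (induction b rule: int_gr_induct)
  case base
  show ?case using cumlen_step[of \<sigma> x "a + 1", simplified] block_length_ge_1[OF ne, of x "a + 1"]
    by linarith
next
  case (step i)
  then show ?case using cumlen_step[of \<sigma> x "i + 1", simplified] block_length_ge_1[OF ne, of x "i + 1"]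
    by linarith
qed

lemma cumlen_mono: "non_erasing \<sigma> \<Longrightarrow> a \<le> b \<Longrightarrow> cumlen \<sigma> x a \<le> cumlen \<sigma> x b"
  using cumlen_strict_mono[of \<sigma> a b x] by (cases "a = b") auto

lemma cumlen_ge_id:
  assumes ne: "non_erasing \<sigma>" and "n \<ge> 0"
  shows "cumlen \<sigma> x n \<ge> n"
  using \<open>n \<ge> 0\<close>
proof (induction n rule: int_ge_induct)
  case (step i)
  then show ?case using cumlen_step[of \<sigma> x "i + 1", simplified] block_length_ge_1[OF ne, of x "i + 1"]
    by linarith
qed simp

lemma cumlen_le_id:
  assumes ne: "non_erasing \<sigma>" and "n \<le> 0"
  shows "cumlen \<sigma> x n \<le> n"
  using \<open>n \<le> 0\<close>
proof (induction n rule: int_le_induct)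
  case (step i)
  then show ?case using cumlen_step[of \<sigma> x i] block_length_ge_1[OF ne, of x i] by simp
qed simp

lemma ex_block_index:
  assumes ne: "non_erasing \<sigma>"
  shows "\<exists>n. cumlen \<sigma> x (n - 1) < i \<and> i \<le> cumlen \<sigma> x n"
proof -
  define m where "m = min (i - 1) 0"
  have below: "cumlen \<sigma> x m < i" using cumlen_le_id[OF ne, of m x] by (simp add: m_def)
  let ?S = "{k::nat. i \<le> cumlen \<sigma> x (m + int k)}"
  have "i \<le> cumlen \<sigma> x (max i 0)" using cumlen_ge_id[OF ne, of "max i 0" x] by linarith
  moreover have "m \<le> max i 0" by (simp add: m_def)
  ultimately have "nat (max i 0 - m) \<in> ?S" by simp
  then have K: "(LEAST k. k \<in> ?S) \<in> ?S" by (rule LeastI)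
  define K where "K = (LEAST k. k \<in> ?S)"
  have "K > 0" using K below by (cases K) (auto simp: K_def)
  have "K - 1 \<notin> ?S"
  proof
    assume "K - 1 \<in> ?S"
    then have "K \<le> K - 1" unfolding K_def by (rule Least_le)
    with \<open>K > 0\<close> show False by simp
  qed
  with \<open>K > 0\<close> have "cumlen \<sigma> x (m + int K - 1) < i" by (simp add: of_nat_diff add_diff_eq)
  with K show ?thesis unfolding K_def[symmetric] by auto
qed

lemma ex1_block_index:
  assumes ne: "non_erasing \<sigma>"
  shows "\<exists>!n. cumlen \<sigma> x (n - 1) < i \<and> i \<le> cumlen \<sigma> x n"
proof (rule ex_ex1I[OF ex_block_index[OF ne]])
  have disjoint: "\<not> (cumlen \<sigma> x (n' - 1) < i \<and> i \<le> cumlen \<sigma> x n)" if "n < n'" for n n'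
    using cumlen_mono[OF ne, of n "n' - 1" x] that by linarith
  fix n n' assume "cumlen \<sigma> x (n - 1) < i \<and> i \<le> cumlen \<sigma> x n"
    and "cumlen \<sigma> x (n' - 1) < i \<and> i \<le> cumlen \<sigma> x n'"
  then show "n = n'" using disjoint[of n n'] disjoint[of n' n] by (meson linorder_neqE)
qed

lemma subst_seq_in_block:
  assumes ne: "non_erasing \<sigma>" and "cumlen \<sigma> x (n - 1) < i" "i \<le> cumlen \<sigma> x n"
  shows "subst_seq \<sigma> x i = \<sigma> (x n) ! nat (i - cumlen \<sigma> x (n - 1) - 1)"
proof -
  have "(THE n. cumlen \<sigma> x (n - 1) < i \<and> i \<le> cumlen \<sigma> x n) = n"
    using the1_equality[OF ex1_block_index[OF ne]] assms by blast
  then show ?thesis by (simp add: subst_seq_def)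
qed

lemma subst_seq_block_nth:
  assumes ne: "non_erasing \<sigma>" and "j < length (\<sigma> (x n))"
  shows "subst_seq \<sigma> x (cumlen \<sigma> x (n - 1) + 1 + int j) = \<sigma> (x n) ! j"
  using subst_seq_in_block[OF ne, of x n "cumlen \<sigma> x (n - 1) + 1 + int j"] assms(2)
    cumlen_step[of \<sigma> x n] by simp

lemma funpow_shift: "(shift ^^ k) y = (\<lambda>i. y (i + int k))"
  by (induction k arbitrary: y) (auto simp: shift_def add.assoc)

lemma funpow_shift_apply: "(shift ^^ k) y i = y (i + int k)"
  by (simp add: funpow_shift)

lemma cumlen_shift: "cumlen \<sigma> (shift x) n = cumlen \<sigma> x (n + 1) - block_length \<sigma> x 1"
proof -
  have "(\<lambda>n. cumlen \<sigma> (shift x) n) = (\<lambda>n. cumlen \<sigma> x (n + 1) - block_length \<sigma> x 1)"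
  proof (rule int_fun_eq_by_differences)
    show "cumlen \<sigma> (shift x) 0 = cumlen \<sigma> x (0 + 1) - block_length \<sigma> x 1"
      using cumlen_step[of \<sigma> x 1] by simp
    fix n
    show "cumlen \<sigma> (shift x) n - cumlen \<sigma> (shift x) (n - 1) =
          cumlen \<sigma> x (n + 1) - block_length \<sigma> x 1 - (cumlen \<sigma> x (n - 1 + 1) - block_length \<sigma> x 1)"
      using cumlen_diff[of \<sigma> "shift x" n] cumlen_diff[of \<sigma> x "n + 1"] by (simp add: shift_def)
  qed
  then show ?thesis by metis
qed

lemma subst_seq_shift:
  assumes ne: "non_erasing \<sigma>"
  shows "subst_seq \<sigma> (shift x) i = subst_seq \<sigma> x (i + block_length \<sigma> x 1)"
proof -
  obtain n where n: "cumlen \<sigma> (shift x) (n - 1) < i" "i \<le> cumlen \<sigma> (shift x) n"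
    using ex_block_index[OF ne] by blast
  have n': "cumlen \<sigma> x (n + 1 - 1) < i + block_length \<sigma> x 1"
    "i + block_length \<sigma> x 1 \<le> cumlen \<sigma> x (n + 1)"
    using n by (simp_all add: cumlen_shift)
  have "nat (i - cumlen \<sigma> (shift x) (n - 1) - 1)
      = nat (i + block_length \<sigma> x 1 - cumlen \<sigma> x (n + 1 - 1) - 1)"
    using cumlen_shift[of \<sigma> x "n - 1"] by simp
  then show ?thesis
    using subst_seq_in_block[OF ne n] subst_seq_in_block[OF ne n'] by (simp add: shift_def)
qed

lemma subst_seq_funpow_shift_apply:
  assumes ne: "non_erasing \<sigma>"
  shows "subst_seq \<sigma> ((shift ^^ m) x) i = subst_seq \<sigma> x (i + cumlen \<sigma> x (int m))"
proof (induction m arbitrary: i)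
  case (Suc m)
  have "subst_seq \<sigma> ((shift ^^ Suc m) x) i
      = subst_seq \<sigma> ((shift ^^ m) x) (i + block_length \<sigma> ((shift ^^ m) x) 1)"
    by (simp add: subst_seq_shift[OF ne])
  also have "\<dots> = subst_seq \<sigma> x (i + block_length \<sigma> x (1 + int m) + cumlen \<sigma> x (int m))"
    by (simp add: Suc.IH funpow_shift_apply)
  also have "\<dots> = subst_seq \<sigma> x (i + cumlen \<sigma> x (int (Suc m)))"
    using cumlen_step[of \<sigma> x "int m + 1"] by (simp add: ac_simps)
  finally show ?case .
qed simp

lemma subst_seq_funpow_shift:
  assumes ne: "non_erasing \<sigma>"
  shows "subst_seq \<sigma> ((shift ^^ m) x) = (shift ^^ nat (cumlen \<sigma> x (int m))) (subst_seq \<sigma> x)"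
proof
  fix i
  have "cumlen \<sigma> x (int m) \<ge> 0" using cumlen_ge_id[OF ne, of "int m" x] by simp
  then show "subst_seq \<sigma> ((shift ^^ m) x) i = (shift ^^ nat (cumlen \<sigma> x (int m))) (subst_seq \<sigma> x) i"
    by (simp add: funpow_shift_apply subst_seq_funpow_shift_apply[OF ne])
qed

section \<open>Composition of morphisms\<close>

lemma cumlen_diff_eq_sum:
  assumes "a \<le> b"
  shows "cumlen \<sigma> z b - cumlen \<sigma> z a = (\<Sum>t\<in>{a<..b}. block_length \<sigma> z t)"
  using assms
proof (induction b rule: int_ge_induct)
  case (step i)
  then have "{a<..i + 1} = insert (i + 1) {a<..i}" by auto
  then show ?case using step cumlen_step[of \<sigma> z "i + 1"] by simp
qed simp

lemma sum_greaterThanAtMost_reindex: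
  "(\<Sum>t\<in>{c<..c + int L}. f t) = (\<Sum>j<L. f (c + 1 + int j))"
proof -
  have "(\<lambda>j. c + 1 + int j) ` {..<L} = {c<..c + int L}"
  proof
    show "{c<..c + int L} \<subseteq> (\<lambda>j. c + 1 + int j) ` {..<L}"
    proof
      fix t assume "t \<in> {c<..c + int L}"
      then have "t = c + 1 + int (nat (t - c - 1))" "nat (t - c - 1) < L" by auto
      then show "t \<in> (\<lambda>j. c + 1 + int j) ` {..<L}" by blast
    qed
  qed auto
  moreover have "inj_on (\<lambda>j. c + 1 + int j) {..<L}" by (auto simp: inj_on_def)
  ultimately show ?thesis by (metis (no_types, lifting) sum.reindex_cong)
qed

lemma length_concat_map_take:
  assumes "j \<le> length w"
  shows "int (length (concat (map \<sigma> (take j w)))) = (\<Sum>j'<j. int (length (\<sigma> (w ! j'))))"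
  using assms
proof (induction j)
  case (Suc j)
  then have "take (Suc j) w = take j w @ [w ! j]" by (simp add: take_Suc_conv_app_nth)
  then show ?case using Suc by simp
qed simp

lemma nth_concat_map:
  assumes "j < length w" "r < length (\<sigma> (w ! j))"
  shows "concat (map \<sigma> w) ! (length (concat (map \<sigma> (take j w))) + r) = \<sigma> (w ! j) ! r"
proof -
  have "w = take j w @ (w ! j) # drop (Suc j) w" using assms(1) by (simp add: id_take_nth_drop)
  then have "concat (map \<sigma> w)
      = concat (map \<sigma> (take j w)) @ \<sigma> (w ! j) @ concat (map \<sigma> (drop (Suc j) w))"
    by (metis concat.simps(2) concat_append map_append list.simps(9))
  then show ?thesis using assms(2) by (simp add: nth_append)
qed

lemma cumlen_subst_seq_in_block:
  assumes ne': "non_erasing \<sigma>'" and j: "j \<le> length (\<sigma>' (x n))"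
  defines "c \<equiv> cumlen \<sigma>' x (n - 1)"
  shows "cumlen \<sigma> (subst_seq \<sigma>' x) (c + int j) - cumlen \<sigma> (subst_seq \<sigma>' x) c
       = int (length (concat (map \<sigma> (take j (\<sigma>' (x n))))))"
proof -
  let ?z = "subst_seq \<sigma>' x" and ?w = "\<sigma>' (x n)"
  have "cumlen \<sigma> ?z (c + int j) - cumlen \<sigma> ?z c = (\<Sum>t\<in>{c<..c + int j}. block_length \<sigma> ?z t)"
    by (rule cumlen_diff_eq_sum) simp
  also have "\<dots> = (\<Sum>j'<j. block_length \<sigma> ?z (c + 1 + int j'))"
    by (rule sum_greaterThanAtMost_reindex)
  also have "\<dots> = (\<Sum>j'<j. int (length (\<sigma> (?w ! j'))))"
    using j by (intro sum.cong) (auto simp: c_def subst_seq_block_nth[OF ne'])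
  also have "\<dots> = int (length (concat (map \<sigma> (take j ?w))))"
    using length_concat_map_take[of j ?w \<sigma>] j by simp
  finally show ?thesis .
qed

lemma cumlen_morph_comp:
  assumes ne': "non_erasing \<sigma>'"
  shows "cumlen \<sigma> (subst_seq \<sigma>' x) (cumlen \<sigma>' x n) = cumlen (morph_comp \<sigma> \<sigma>') x n"
proof -
  let ?z = "subst_seq \<sigma>' x"
  have "(\<lambda>n. cumlen \<sigma> ?z (cumlen \<sigma>' x n)) = cumlen (morph_comp \<sigma> \<sigma>') x"
  proof (rule int_fun_eq_by_differences)
    fix n
    have "cumlen \<sigma> ?z (cumlen \<sigma>' x n) - cumlen \<sigma> ?z (cumlen \<sigma>' x (n - 1))
        = int (length (morph_comp \<sigma> \<sigma>' (x n)))"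
      using cumlen_subst_seq_in_block[OF ne', of "length (\<sigma>' (x n))" x n \<sigma>]
        cumlen_step[of \<sigma>' x n] by (simp add: morph_comp_def)
    then show "cumlen \<sigma> ?z (cumlen \<sigma>' x n) - cumlen \<sigma> ?z (cumlen \<sigma>' x (n - 1))
        = cumlen (morph_comp \<sigma> \<sigma>') x n - cumlen (morph_comp \<sigma> \<sigma>') x (n - 1)"
      using cumlen_diff[of "morph_comp \<sigma> \<sigma>'" x n] by simp
  qed simp
  then show ?thesis by metis
qed

lemma non_erasing_morph_comp:
  "non_erasing \<sigma> \<Longrightarrow> non_erasing \<sigma>' \<Longrightarrow> non_erasing (morph_comp \<sigma> \<sigma>')"
  unfolding non_erasing_def morph_comp_def
  by (metis concat_eq_Nil_conv list.exhaust list.set_intros(1) list.simps(9))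

lemma subst_seq_morph_comp:
  assumes ne: "non_erasing \<sigma>" and ne': "non_erasing \<sigma>'"
  shows "subst_seq (morph_comp \<sigma> \<sigma>') x = subst_seq \<sigma> (subst_seq \<sigma>' x)"
proof
  fix p
  let ?z = "subst_seq \<sigma>' x" and ?\<tau> = "morph_comp \<sigma> \<sigma>'"
  obtain t where t: "cumlen \<sigma> ?z (t - 1) < p" "p \<le> cumlen \<sigma> ?z t"
    using ex_block_index[OF ne] by blast
  obtain n where n: "cumlen \<sigma>' x (n - 1) < t" "t \<le> cumlen \<sigma>' x n"
    using ex_block_index[OF ne'] by blast
  let ?c = "cumlen \<sigma>' x (n - 1)" and ?w = "\<sigma>' (x n)"
  define j where "j = nat (t - ?c - 1)"
  have tj: "t = ?c + 1 + int j" using n by (simp add: j_def)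
  have jw: "j < length ?w" using n cumlen_step[of \<sigma>' x n] by (simp add: j_def)
  have zt: "?z t = ?w ! j" using subst_seq_block_nth[OF ne', of j x n] jw tj by simp
  define r where "r = nat (p - cumlen \<sigma> ?z (t - 1) - 1)"
  have pr: "p = cumlen \<sigma> ?z (t - 1) + 1 + int r" using t by (simp add: r_def)
  have rl: "r < length (\<sigma> (?w ! j))" using t cumlen_step[of \<sigma> ?z t] zt by (simp add: r_def)
  have "subst_seq \<sigma> ?z p = \<sigma> (?w ! j) ! r"
    using subst_seq_block_nth[of \<sigma> r ?z t] ne rl zt pr by simp
  moreover have pb: "cumlen ?\<tau> x (n - 1) < p" "p \<le> cumlen ?\<tau> x n"
  proof -
    have "cumlen \<sigma> ?z ?c \<le> cumlen \<sigma> ?z (t - 1)" using n by (intro cumlen_mono[OF ne]) simp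
    moreover have "cumlen \<sigma> ?z t \<le> cumlen \<sigma> ?z (cumlen \<sigma>' x n)" using n by (intro cumlen_mono[OF ne])
    ultimately show "cumlen ?\<tau> x (n - 1) < p" "p \<le> cumlen ?\<tau> x n"
      using t cumlen_morph_comp[OF ne', of \<sigma> x "n - 1"] cumlen_morph_comp[OF ne', of \<sigma> x n] by linarith+
  qed
  moreover have "nat (p - cumlen ?\<tau> x (n - 1) - 1) = length (concat (map \<sigma> (take j ?w))) + r"
    using pr cumlen_subst_seq_in_block[OF ne', of j x n \<sigma>] jw tj cumlen_morph_comp[OF ne', of \<sigma> x]
    by simp
  ultimately show "subst_seq ?\<tau> x p = subst_seq \<sigma> ?z p"
    using subst_seq_in_block[OF non_erasing_morph_comp[OF ne ne'] pb] nth_concat_map[of j ?w r \<sigma>] jw rl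
    by (simp add: morph_comp_def)
qed

section \<open>Local sets and the Borel structure of the full shift\<close>

definition agree :: "nat \<Rightarrow> (int \<Rightarrow> 'a) \<Rightarrow> (int \<Rightarrow> 'a) \<Rightarrow> bool" where
  "agree n x y \<longleftrightarrow> (\<forall>i. - int n \<le> i \<and> i \<le> int n \<longrightarrow> x i = y i)"

definition cylinder :: "nat \<Rightarrow> (int \<Rightarrow> 'a) \<Rightarrow> (int \<Rightarrow> 'a) set" where
  "cylinder n x = {y. agree n x y}"

definition local_set :: "nat \<Rightarrow> (int \<Rightarrow> 'a) set \<Rightarrow> bool" where
  "local_set n A \<longleftrightarrow> (\<forall>x y. agree n x y \<longrightarrow> (x \<in> A \<longleftrightarrow> y \<in> A))"

definition local_sets :: "(int \<Rightarrow> 'a) set set" where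
  "local_sets = {A. \<exists>n. local_set n A}"

lemma agree_sym: "agree n x y \<Longrightarrow> agree n y x"
  by (auto simp: agree_def)

lemma agree_trans: "agree n x y \<Longrightarrow> agree n y z \<Longrightarrow> agree n x z"
  by (auto simp: agree_def)

lemma agree_mono: "agree n x y \<Longrightarrow> m \<le> n \<Longrightarrow> agree m x y"
  by (auto simp: agree_def)

lemma cylinder_self [simp]: "x \<in> cylinder n x"
  by (simp add: cylinder_def agree_def)

lemma cylinder_eq: "y \<in> cylinder n z \<Longrightarrow> cylinder n y = cylinder n z"
  unfolding cylinder_def using agree_trans agree_sym by blast

lemma local_set_cylinder: "local_set n (cylinder n x)"
  unfolding local_set_def cylinder_def using agree_trans agree_sym by blast

lemma local_set_mono: "local_set m A \<Longrightarrow> m \<le> n \<Longrightarrow> local_set n A"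
  unfolding local_set_def using agree_mono by blast

lemma local_set_compl: "local_set n A \<Longrightarrow> local_set n (- A)"
  unfolding local_set_def by blast

lemma local_set_diff: "local_set n A \<Longrightarrow> local_set n B \<Longrightarrow> local_set n (A - B)"
  unfolding local_set_def by blast

lemma local_set_Un: "local_set n A \<Longrightarrow> local_set n B \<Longrightarrow> local_set n (A \<union> B)"
  unfolding local_set_def by blast

lemma local_set_Int: "local_set n A \<Longrightarrow> local_set n B \<Longrightarrow> local_set n (A \<inter> B)"
  unfolding local_set_def by blast

lemma local_set_vimage_funpow_shift:
  assumes "local_set n B"
  shows "local_set (n + k) ((shift ^^ k) -` B)"
  using assms unfolding local_set_def agree_def by (auto simp: funpow_shift_apply)

lemma local_sets_UNIV [simp]: "UNIV \<in> local_sets"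
  by (auto simp: local_sets_def local_set_def)

lemma local_sets_empty [simp]: "{} \<in> local_sets"
  by (auto simp: local_sets_def local_set_def)

lemma local_sets_common_window:
  assumes "A \<in> local_sets" "B \<in> local_sets"
  obtains n where "local_set n A" "local_set n B"
proof -
  obtain n m where "local_set n A" "local_set m B" using assms by (auto simp: local_sets_def)
  then show thesis by (meson local_set_mono max.cobounded1 max.cobounded2 that)
qed

lemma local_sets_Int: "A \<in> local_sets \<Longrightarrow> B \<in> local_sets \<Longrightarrow> A \<inter> B \<in> local_sets"
  by (metis local_sets_common_window local_set_Int local_sets_def mem_Collect_eq)

lemma local_sets_Un: "A \<in> local_sets \<Longrightarrow> B \<in> local_sets \<Longrightarrow> A \<union> B \<in> local_sets"
  by (metis local_sets_common_window local_set_Un local_sets_def mem_Collect_eq)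

lemma local_sets_diff: "A \<in> local_sets \<Longrightarrow> B \<in> local_sets \<Longrightarrow> A - B \<in> local_sets"
  by (metis local_sets_common_window local_set_diff local_sets_def mem_Collect_eq)

lemma Int_stable_local_sets: "Int_stable local_sets"
  unfolding Int_stable_def using local_sets_Int by blast

lemma ring_of_sets_local_sets: "ring_of_sets UNIV local_sets"
  by (rule ring_of_setsI) (auto intro: local_sets_Un local_sets_diff)

lemma local_sets_vimage_funpow_shift:
  "A \<in> local_sets \<Longrightarrow> (shift ^^ k) -` A \<in> local_sets"
  unfolding local_sets_def using local_set_vimage_funpow_shift by blast

definition cylinders :: "nat \<Rightarrow> (int \<Rightarrow> 'a) set \<Rightarrow> (int \<Rightarrow> 'a) set set" where
  "cylinders n Y = {cylinder n y | y. y \<in> Y}"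

lemma finite_cylinders: "finite (cylinders n (Y :: (int \<Rightarrow> 'a::finite) set))"
proof -
  let ?W = "{- int n..int n}"
  have "cylinders n Y \<subseteq> (\<lambda>y. cylinder n y) ` Pi\<^sub>E ?W (\<lambda>_. UNIV)"
  proof
    fix C assume "C \<in> cylinders n Y"
    then obtain y where C: "C = cylinder n y" unfolding cylinders_def by blast
    have "cylinder n y = cylinder n (restrict y ?W)" unfolding cylinder_def agree_def by auto
    moreover have "restrict y ?W \<in> Pi\<^sub>E ?W (\<lambda>_. UNIV)" by simp
    ultimately show "C \<in> (\<lambda>y. cylinder n y) ` Pi\<^sub>E ?W (\<lambda>_. UNIV)" using C by blast
  qed
  moreover have "finite (Pi\<^sub>E ?W (\<lambda>_. UNIV :: 'a set))" by (intro finite_PiE) auto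
  ultimately show ?thesis using finite_subset by blast
qed

lemma cylinders_disjoint:
  "C \<in> cylinders n Y \<Longrightarrow> C' \<in> cylinders n Y \<Longrightarrow> C \<noteq> C' \<Longrightarrow> C \<inter> C' = {}"
  unfolding cylinders_def using cylinder_eq by blast

lemma cylinders_cover: "Y \<subseteq> \<Union>(cylinders n Y)"
  unfolding cylinders_def using cylinder_self by blast

text \<open>Each set depending only on a given window is a union of the finitely many cylinders
  of that window.\<close>

lemma countable_local_sets: "countable (local_sets :: (int \<Rightarrow> 'a::finite) set set)"
proof -
  have fin: "finite {A :: (int \<Rightarrow> 'a) set. local_set n A}" for n
  proof (rule finite_subset)
    show "{A :: (int \<Rightarrow> 'a) set. local_set n A} \<subseteq> Union ` Pow (cylinders n UNIV)"
    proof
      fix A :: "(int \<Rightarrow> 'a) set" assume "A \<in> {A. local_set n A}"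
      then have "A = \<Union>{cylinder n y | y. y \<in> A}"
        using cylinder_self unfolding local_set_def cylinder_def by blast
      moreover have "{cylinder n y | y. y \<in> A} \<subseteq> cylinders n UNIV" unfolding cylinders_def by blast
      ultimately show "A \<in> Union ` Pow (cylinders n UNIV)" by blast
    qed
  qed (simp add: finite_cylinders)
  have "local_sets = (\<Union>n. {A :: (int \<Rightarrow> 'a) set. local_set n A})"
    unfolding local_sets_def by blast
  moreover have "countable (\<Union>n. {A :: (int \<Rightarrow> 'a) set. local_set n A})"
    using fin by (intro countable_UN) (auto intro: countable_finite)
  ultimately show ?thesis by simp
qed

lemma topspace_shift_top [simp]: "topspace shift_top = UNIV"
  by (simp add: shift_top_def)

lemma compact_space_shift_top: "compact_space (shift_top :: (int \<Rightarrow> 'a::finite) topology)"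
  unfolding shift_top_def by (simp add: compact_space_product_topology compact_space_discrete_topology)

lemma Hausdorff_space_shift_top: "Hausdorff_space shift_top"
  unfolding shift_top_def by (simp add: Hausdorff_space_product_topology)

lemma openin_local_set:
  assumes "local_set n A"
  shows "openin shift_top A"
  unfolding shift_top_def openin_product_topology_alt
proof
  fix x assume x: "x \<in> A"
  define U where "U = (\<lambda>i. if - int n \<le> i \<and> i \<le> int n then {x i} else UNIV)"
  have "{i \<in> UNIV. U i \<noteq> topspace (discrete_topology UNIV)} \<subseteq> {- int n..int n}"
    by (auto simp: U_def)
  then have "finite {i \<in> UNIV. U i \<noteq> topspace (discrete_topology UNIV)}"
    using finite_subset by blast
  moreover have "x \<in> Pi\<^sub>E UNIV U" by (auto simp: U_def PiE_iff)
  moreover have "Pi\<^sub>E UNIV U \<subseteq> A"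
  proof
    fix y assume "y \<in> Pi\<^sub>E UNIV U"
    then have "agree n x y" by (auto simp: agree_def U_def PiE_iff split: if_splits)
    then show "y \<in> A" using assms x unfolding local_set_def by blast
  qed
  ultimately show "\<exists>U. finite {i \<in> UNIV. U i \<noteq> topspace (discrete_topology UNIV)} \<and>
      (\<forall>i\<in>UNIV. openin (discrete_topology UNIV) (U i)) \<and> x \<in> Pi\<^sub>E UNIV U \<and> Pi\<^sub>E UNIV U \<subseteq> A"
    by auto
qed

lemma closedin_local_set: "local_set n A \<Longrightarrow> closedin shift_top A"
  using openin_local_set[OF local_set_compl] by (simp add: closedin_def Compl_eq_Diff_UNIV)

lemma openin_cylinder_subset:
  assumes "openin shift_top U" "x \<in> U"
  shows "\<exists>n. cylinder n x \<subseteq> U"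
proof -
  obtain V where V: "finite {i \<in> UNIV. V i \<noteq> topspace (discrete_topology UNIV)}"
     "x \<in> Pi\<^sub>E UNIV V" "Pi\<^sub>E UNIV V \<subseteq> U"
    using assms unfolding shift_top_def openin_product_topology_alt by blast
  then have "finite ((nat \<circ> abs) ` {i. V i \<noteq> UNIV})" by simp
  then obtain n where "(nat \<circ> abs) ` {i. V i \<noteq> UNIV} \<subseteq> {..<n}"
    using finite_nat_bounded by blast
  then have n: "\<bar>i\<bar> \<le> int n" if "V i \<noteq> UNIV" for i
    using that by force
  have "cylinder n x \<subseteq> Pi\<^sub>E UNIV V"
  proof
    fix y assume "y \<in> cylinder n x"
    then have xy: "x i = y i" if "\<bar>i\<bar> \<le> int n" for i
      using that by (simp add: cylinder_def agree_def abs_le_iff)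
    have "y i \<in> V i" for i
    proof (cases "V i = UNIV")
      case False
      then show ?thesis using PiE_mem[OF V(2) UNIV_I, of i] xy[OF n[OF False]] by simp
    qed simp
    then show "y \<in> Pi\<^sub>E UNIV V" by (simp add: PiE_iff)
  qed
  then show ?thesis using V(3) by blast
qed

lemma openin_eq_Union_local_sets:
  assumes "openin shift_top U"
  shows "U = (\<Union>n. {x. cylinder n x \<subseteq> U})" and "local_set n {x. cylinder n x \<subseteq> U}"
proof -
  show "U = (\<Union>n. {x. cylinder n x \<subseteq> U})" using openin_cylinder_subset[OF assms] cylinder_self by blast
  show "local_set n {x. cylinder n x \<subseteq> U}"
    unfolding local_set_def cylinder_def using agree_trans agree_sym by blast
qed

lemma local_sets_disjoint_eventually_empty:
  fixes A :: "nat \<Rightarrow> (int \<Rightarrow> 'a::finite) set"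
  assumes A: "range A \<subseteq> local_sets" and disj: "disjoint_family A" and U: "(\<Union>i. A i) \<in> local_sets"
  shows "\<exists>n. \<forall>i\<ge>n. A i = {}"
proof -
  obtain r where "local_set r (\<Union>i. A i)" using U unfolding local_sets_def by blast
  then have "compactin shift_top (\<Union>i. A i)"
    by (rule closedin_compact_space[OF compact_space_shift_top closedin_local_set])
  moreover have "\<forall>U\<in>range A. openin shift_top U"
    using A unfolding local_sets_def by (auto intro: openin_local_set)
  ultimately obtain F where F: "finite F" "F \<subseteq> range A" "(\<Union>i. A i) \<subseteq> \<Union>F"
    unfolding compactin_def by (metis order_refl)
  obtain J where J: "finite J" "F = A ` J" using finite_subset_image[OF F(1) F(2)] by blast
  obtain n where n: "\<And>j. j \<in> J \<Longrightarrow> j < n" using J(1) finite_nat_bounded by blast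
  have "A i = {}" if "i \<ge> n" for i
  proof (rule ccontr)
    assume "A i \<noteq> {}"
    then obtain z where z: "z \<in> A i" by blast
    then obtain j where "j \<in> J" "z \<in> A j" using F(3) J(2) by blast
    moreover from \<open>j \<in> J\<close> have "j \<noteq> i" using n that by fastforce
    ultimately show False using disj z unfolding disjoint_family_on_def by blast
  qed
  then show ?thesis by blast
qed

lemma sets_shift_borel: "sets shift_borel = sigma_sets UNIV local_sets"
proof -
  have "sets shift_borel = sigma_sets UNIV {U. openin shift_top U}"
    unfolding shift_borel_def by (simp add: sets_measure_of)
  also have "\<dots> = sigma_sets UNIV local_sets"
  proof (rule sigma_sets_eqI)
    fix U assume "U \<in> {U. openin shift_top U}"
    then have U: "openin shift_top U" by simp
    have "(\<Union>n. {x. cylinder n x \<subseteq> U}) \<in> sigma_sets UNIV local_sets"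
      using openin_eq_Union_local_sets(2)[OF U]
      by (intro sigma_sets.Union) (auto simp: local_sets_def)
    then show "U \<in> sigma_sets UNIV local_sets" using openin_eq_Union_local_sets(1)[OF U] by simp
  next
    fix A assume "A \<in> local_sets"
    then show "A \<in> sigma_sets UNIV {U. openin shift_top U}"
      by (auto simp: local_sets_def intro: openin_local_set)
  qed
  finally show ?thesis .
qed

lemma space_shift_borel [simp]: "space shift_borel = UNIV"
  by (simp add: shift_borel_def)

lemma shift_borel_eq_sigma_local_sets: "shift_borel = sigma UNIV local_sets"
  using sets_shift_borel by (intro measure_eqI) (auto simp: emeasure_sigma shift_borel_def)

lemma sigma_algebra_shift_borel: "sigma_algebra UNIV (sets shift_borel)"
  using sets.sigma_algebra_axioms[of shift_borel] by simp

lemma local_sets_in_shift_borel: "A \<in> local_sets \<Longrightarrow> A \<in> sets shift_borel"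
  by (simp add: sets_shift_borel)

lemma local_set_in_shift_borel: "local_set n A \<Longrightarrow> A \<in> sets shift_borel"
  by (auto simp: sets_shift_borel local_sets_def)

lemma closedin_in_shift_borel:
  assumes "closedin shift_top X"
  shows "X \<in> sets shift_borel"
proof -
  have "UNIV - X \<in> sets shift_borel"
    using assms unfolding closedin_def shift_borel_def by (auto simp: sets_measure_of)
  then have "UNIV - (UNIV - X) \<in> sets shift_borel" using sets.compl_sets[of "UNIV - X" shift_borel] by simp
  moreover have "UNIV - (UNIV - X) = X" by blast
  ultimately show ?thesis by simp
qed

section \<open>Uniformly local maps\<close>

definition uniformly_local :: "((int \<Rightarrow> 'a) \<Rightarrow> (int \<Rightarrow> 'b)) \<Rightarrow> bool" where
  "uniformly_local f \<longleftrightarrow> (\<forall>n. \<exists>m. \<forall>x y. agree m x y \<longrightarrow> agree n (f x) (f y))"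

lemma uniformly_local_compose:
  "uniformly_local f \<Longrightarrow> uniformly_local g \<Longrightarrow> uniformly_local (\<lambda>x. f (g x))"
  unfolding uniformly_local_def by metis

lemma uniformly_local_vimage_local_sets:
  assumes "uniformly_local f" "A \<in> local_sets"
  shows "f -` A \<in> local_sets"
proof -
  obtain n where n: "local_set n A" using assms(2) unfolding local_sets_def by blast
  obtain m where "\<forall>x y. agree m x y \<longrightarrow> agree n (f x) (f y)"
    using assms(1) unfolding uniformly_local_def by blast
  then have "local_set m (f -` A)" using n unfolding local_set_def by auto
  then show ?thesis unfolding local_sets_def by blast
qed

lemma uniformly_local_measurable:
  assumes "uniformly_local f"
  shows "f \<in> shift_borel \<rightarrow>\<^sub>M shift_borel"
proof -
  have "f \<in> shift_borel \<rightarrow>\<^sub>M sigma UNIV local_sets"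
    using uniformly_local_vimage_local_sets[OF assms]
    by (intro measurable_measure_of) (auto simp: local_sets_in_shift_borel)
  then show ?thesis by (simp flip: shift_borel_eq_sigma_local_sets)
qed

lemma uniformly_local_continuous_map:
  fixes f :: "(int \<Rightarrow> 'a) \<Rightarrow> (int \<Rightarrow> 'b)"
  assumes "uniformly_local f"
  shows "continuous_map shift_top shift_top f"
  unfolding shift_top_def continuous_map_componentwise_UNIV
proof
  fix k :: int
  obtain m where m: "\<forall>x y. agree m x y \<longrightarrow> agree (nat \<bar>k\<bar>) (f x) (f y)"
    using assms unfolding uniformly_local_def by blast
  have "f x k = f y k" if "agree m x y" for x y
  proof -
    have "agree (nat \<bar>k\<bar>) (f x) (f y)" using m that by blast
    moreover have "- int (nat \<bar>k\<bar>) \<le> k \<and> k \<le> int (nat \<bar>k\<bar>)" by linarith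
    ultimately show ?thesis unfolding agree_def by blast
  qed
  then have "local_set m {x :: int \<Rightarrow> 'a. f x k \<in> U}" for U
    unfolding local_set_def by auto
  then have "openin shift_top {x. f x k \<in> U}" for U by (rule openin_local_set)
  then show "continuous_map (product_topology (\<lambda>_. discrete_topology UNIV) UNIV)
      (discrete_topology UNIV) (\<lambda>x. f x k)"
    unfolding continuous_map_def by (simp add: shift_top_def)
qed

lemma uniformly_local_shift: "uniformly_local shift"
  unfolding uniformly_local_def
proof
  show "\<exists>m. \<forall>x y. agree m x y \<longrightarrow> agree n (shift x) (shift y)" for n
    by (rule exI[of _ "n + 1"]) (auto simp: agree_def shift_def)
qed

lemma uniformly_local_funpow_shift: "uniformly_local (shift ^^ k)"
proof (induction k)
  case (Suc k)
  then show ?case using uniformly_local_compose[OF uniformly_local_shift Suc] by simp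
qed (auto simp: uniformly_local_def)

lemma cumlen_cong:
  assumes "\<And>k. (0 < k \<and> k \<le> j) \<or> (j < k \<and> k \<le> 0) \<Longrightarrow> x k = y k"
  shows "cumlen \<sigma> x j = cumlen \<sigma> y j"
  unfolding cumlen_def using assms by (auto intro!: sum.cong)

text \<open>Since all blocks are non-empty, the letter of \<open>\<sigma>(x)\<close> at position \<open>i\<close> lies in a block
  \<open>\<sigma>(x\<^sub>m)\<close> with \<open>|m| \<le> |i|\<close>.\<close>

lemma subst_seq_local:
  assumes ne: "non_erasing \<sigma>" and ag: "agree n x y" and i: "- int n \<le> i" "i \<le> int n"
  shows "subst_seq \<sigma> x i = subst_seq \<sigma> y i"
proof -
  obtain m where m: "cumlen \<sigma> x (m - 1) < i" "i \<le> cumlen \<sigma> x m"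
    using ex_block_index[OF ne] by blast
  have eq: "cumlen \<sigma> x (m - 1) = cumlen \<sigma> y (m - 1) \<and> cumlen \<sigma> x m = cumlen \<sigma> y m \<and> x m = y m"
  proof (cases "m \<ge> 1")
    case True
    have "m - 1 \<le> cumlen \<sigma> x (m - 1)" using cumlen_ge_id[OF ne, of "m - 1" x] True by simp
    then have "\<And>k. 0 < k \<Longrightarrow> k \<le> m \<Longrightarrow> x k = y k" using ag m i unfolding agree_def by auto
    then show ?thesis using True by (auto intro!: cumlen_cong)
  next
    case False
    have "cumlen \<sigma> x m \<le> m" using cumlen_le_id[OF ne, of m x] False by simp
    then have "\<And>k. m \<le> k \<Longrightarrow> k \<le> 0 \<Longrightarrow> x k = y k" using ag m i unfolding agree_def by auto
    then show ?thesis using False by (auto intro!: cumlen_cong)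
  qed
  have m': "cumlen \<sigma> y (m - 1) < i" "i \<le> cumlen \<sigma> y m" using m eq by auto
  show ?thesis using subst_seq_in_block[OF ne m] subst_seq_in_block[OF ne m'] eq by simp
qed

lemma uniformly_local_subst_seq: "non_erasing \<sigma> \<Longrightarrow> uniformly_local (subst_seq \<sigma>)"
  unfolding uniformly_local_def agree_def using subst_seq_local[unfolded agree_def] by blast

section \<open>Subshifts and invariant measures\<close>

lemma inj_shift: "inj shift"
proof (rule injI)
  fix x y :: "int \<Rightarrow> 'a" assume "shift x = shift y"
  then have "\<And>i. x (i - 1 + 1) = y (i - 1 + 1)" unfolding shift_def by metis
  then show "x = y" by auto
qed

definition unshift :: "(int \<Rightarrow> 'a) \<Rightarrow> (int \<Rightarrow> 'a)" where
  "unshift y = (\<lambda>i. y (i - 1))"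

lemma shift_unshift [simp]: "shift (unshift y) = y"
  by (simp add: shift_def unshift_def)

lemma subshift_shift_iff:
  assumes "subshift X"
  shows "shift x \<in> X \<longleftrightarrow> x \<in> X"
proof
  assume "shift x \<in> X"
  then have "shift x \<in> shift ` X" using assms unfolding subshift_def by simp
  then show "x \<in> X" using inj_shift by (auto dest: injD)
qed (use assms in \<open>auto simp: subshift_def\<close>)

lemma subshift_funpow_shift: "subshift X \<Longrightarrow> x \<in> X \<Longrightarrow> (shift ^^ k) x \<in> X"
  by (induction k) (auto simp: subshift_shift_iff)

lemma subshift_in_shift_borel: "subshift X \<Longrightarrow> X \<in> sets shift_borel"
  unfolding subshift_def by (auto intro: closedin_in_shift_borel)

lemma subshift_UNIV: "subshift UNIV"
  unfolding subshift_def by (metis closedin_topspace shift_unshift surjI topspace_shift_top)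

lemma subshift_Inter:
  assumes "F \<noteq> {}" "\<And>Z. Z \<in> F \<Longrightarrow> subshift Z"
  shows "subshift (\<Inter>F)"
  unfolding subshift_def
proof
  show "closedin shift_top (\<Inter>F)" using assms by (intro closedin_Inter) (auto simp: subshift_def)
  show "shift ` \<Inter>F = \<Inter>F"
  proof
    show "shift ` \<Inter>F \<subseteq> \<Inter>F" using assms(2) subshift_shift_iff by blast
    show "\<Inter>F \<subseteq> shift ` \<Inter>F"
    proof
      fix y assume "y \<in> \<Inter>F"
      then have "unshift y \<in> \<Inter>F" using assms(2) subshift_shift_iff[of _ "unshift y"] by auto
      then show "y \<in> shift ` \<Inter>F" by (metis image_eqI shift_unshift)
    qed
  qed
qed

lemma subshift_generated_subshift: "subshift (generated_subshift \<sigma> X)"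
  unfolding generated_subshift_def using subshift_UNIV by (intro subshift_Inter) auto

lemma subst_seq_in_generated_subshift: "x \<in> X \<Longrightarrow> subst_seq \<sigma> x \<in> generated_subshift \<sigma> X"
  unfolding generated_subshift_def by auto

lemma generated_subshift_least:
  "subshift Z \<Longrightarrow> subst_seq \<sigma> ` X \<subseteq> Z \<Longrightarrow> generated_subshift \<sigma> X \<subseteq> Z"
  unfolding generated_subshift_def by auto

lemma inv_measuresD:
  assumes "\<mu> \<in> inv_measures X"
  shows "sets \<mu> = sets shift_borel" and "space \<mu> = UNIV" and "finite_measure \<mu>"
    and "\<And>B. B \<in> sets shift_borel \<Longrightarrow> emeasure \<mu> (shift -` B) = emeasure \<mu> B"
    and "emeasure \<mu> (UNIV - X) = 0"
  using assms sets_eq_imp_space_eq[of \<mu> shift_borel] by (auto simp: inv_measures_def)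

lemma measurable_shift: "shift \<in> shift_borel \<rightarrow>\<^sub>M shift_borel"
  by (rule uniformly_local_measurable[OF uniformly_local_shift])

lemma distr_shift_eq_self:
  assumes "\<mu> \<in> inv_measures X"
  shows "distr \<mu> shift_borel shift = \<mu>"
proof (rule measure_eqI)
  note \<mu> = inv_measuresD[OF assms]
  show "sets (distr \<mu> shift_borel shift) = sets \<mu>" using \<mu>(1) by simp
  fix A assume "A \<in> sets (distr \<mu> shift_borel shift)"
  then show "emeasure (distr \<mu> shift_borel shift) A = emeasure \<mu> A"
    using emeasure_distr[of shift \<mu> shift_borel A] measurable_shift \<mu>
    by (simp add: measurable_cong_sets[OF \<mu>(1) refl])
qed

lemma nn_set_integral_comp_shift:
  assumes \<mu>: "\<mu> \<in> inv_measures Z" and X: "subshift X" and g: "g \<in> borel_measurable shift_borel"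
  shows "(\<integral>\<^sup>+ x \<in> X. g (shift x) \<partial>\<mu>) = (\<integral>\<^sup>+ x \<in> X. g x \<partial>\<mu>)"
proof -
  note sets_\<mu> = inv_measuresD(1)[OF \<mu>]
  have "(\<integral>\<^sup>+ x \<in> X. g (shift x) \<partial>\<mu>) = (\<integral>\<^sup>+ x. g (shift x) * indicator X (shift x) \<partial>\<mu>)"
    using subshift_shift_iff[OF X] by (intro nn_integral_cong) (simp add: indicator_def)
  also have "\<dots> = (\<integral>\<^sup>+ x \<in> X. g x \<partial>distr \<mu> shift_borel shift)"
    using measurable_shift g subshift_in_shift_borel[OF X]
    by (intro nn_integral_distr[symmetric]) (auto simp: measurable_cong_sets[OF sets_\<mu> refl])
  finally show ?thesis by (simp add: distr_shift_eq_self[OF \<mu>])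
qed

section \<open>The counting function and the measure \<open>\<sigma>\<^sub>M(\<mu>)\<close>\<close>

definition max_length :: "('a::finite \<Rightarrow> 'b list) \<Rightarrow> nat" where
  "max_length \<sigma> = Max (range (\<lambda>a. length (\<sigma> a)))"

lemma length_le_max_length: "length (\<sigma> a) \<le> max_length \<sigma>"
  unfolding max_length_def by (rule Max_ge) auto

lemma max_length_pos:
  assumes "non_erasing \<sigma>"
  shows "0 < max_length \<sigma>"
proof -
  have "0 < length (\<sigma> undefined)" using assms by (simp add: non_erasing_def)
  then show ?thesis using length_le_max_length[of \<sigma> undefined] by linarith
qed

definition shifted_subst :: "('a \<Rightarrow> 'b list) \<Rightarrow> nat \<Rightarrow> (int \<Rightarrow> 'a) \<Rightarrow> (int \<Rightarrow> 'b)" where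
  "shifted_subst \<sigma> k x = (shift ^^ k) (subst_seq \<sigma> x)"

definition hit_set :: "('a \<Rightarrow> 'b list) \<Rightarrow> nat \<Rightarrow> (int \<Rightarrow> 'b) set \<Rightarrow> (int \<Rightarrow> 'a) set" where
  "hit_set \<sigma> k B = {x. k < length (\<sigma> (x 1)) \<and> shifted_subst \<sigma> k x \<in> B}"

lemma shifted_subst_0: "shifted_subst \<sigma> 0 x = subst_seq \<sigma> x"
  by (simp add: shifted_subst_def)

lemma shifted_subst_Suc: "shifted_subst \<sigma> (Suc k) x = shift (shifted_subst \<sigma> k x)"
  by (simp add: shifted_subst_def)

lemma shifted_subst_length:
  assumes ne: "non_erasing \<sigma>"
  shows "shifted_subst \<sigma> (length (\<sigma> (x 1))) x = subst_seq \<sigma> (shift x)"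
  using subst_seq_funpow_shift[OF ne, of 1 x] cumlen_step[of \<sigma> x 1] by (simp add: shifted_subst_def)

lemma shifted_subst_in_generated_subshift:
  "x \<in> X \<Longrightarrow> shifted_subst \<sigma> k x \<in> generated_subshift \<sigma> X"
  unfolding shifted_subst_def
  by (intro subshift_funpow_shift subshift_generated_subshift subst_seq_in_generated_subshift)

lemma uniformly_local_shifted_subst: "non_erasing \<sigma> \<Longrightarrow> uniformly_local (shifted_subst \<sigma> k)"
  unfolding shifted_subst_def
  by (rule uniformly_local_compose[OF uniformly_local_funpow_shift uniformly_local_subst_seq])

lemma hit_set_eq: "hit_set \<sigma> k B = {x. k < length (\<sigma> (x 1))} \<inter> shifted_subst \<sigma> k -` B"
  by (auto simp: hit_set_def)

lemma local_set_length_gt: "local_set 1 {x. k < length (\<sigma> (x (1::int)))}"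
  unfolding local_set_def agree_def by auto

lemma hit_set_in_shift_borel:
  assumes ne: "non_erasing \<sigma>" and B: "B \<in> sets shift_borel"
  shows "hit_set \<sigma> k B \<in> sets shift_borel"
proof -
  have "shifted_subst \<sigma> k -` B \<inter> space shift_borel \<in> sets shift_borel"
    using measurable_sets[OF uniformly_local_measurable[OF uniformly_local_shifted_subst[OF ne]] B] .
  then have "shifted_subst \<sigma> k -` B \<in> sets shift_borel" by simp
  with local_set_in_shift_borel[OF local_set_length_gt[of k \<sigma>]] show ?thesis
    unfolding hit_set_eq by (rule sets.Int)
qed

lemma hit_set_local:
  assumes ne: "non_erasing \<sigma>" and B: "B \<in> local_sets"
  shows "hit_set \<sigma> k B \<in> local_sets"
  unfolding hit_set_eq
  using uniformly_local_vimage_local_sets[OF uniformly_local_shifted_subst[OF ne] B]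
    local_set_length_gt
  by (intro local_sets_Int) (auto simp: local_sets_def)

lemma push_count_eq_sum:
  "push_count \<sigma> B x = (\<Sum>k<length (\<sigma> (x 1)). indicator B (shifted_subst \<sigma> k x))"
proof -
  let ?S = "{k. shifted_subst \<sigma> k x \<in> B}"
  have "(\<Sum>k<length (\<sigma> (x 1)). indicator B (shifted_subst \<sigma> k x) :: ennreal)
      = (\<Sum>k\<in>{..<length (\<sigma> (x 1))}. if k \<in> ?S then 1 else 0)"
    by (intro sum.cong) (auto simp: indicator_def)
  also have "\<dots> = (\<Sum>k\<in>{..<length (\<sigma> (x 1))} \<inter> ?S. 1)"
    by (rule sum.inter_restrict[symmetric]) simp
  also have "\<dots> = of_nat (card ({..<length (\<sigma> (x 1))} \<inter> ?S))" by simp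
  also have "{..<length (\<sigma> (x 1))} \<inter> ?S
      = {k. k < length (\<sigma> (x 1)) \<and> (shift ^^ k) (subst_seq \<sigma> x) \<in> B}"
    by (auto simp: shifted_subst_def)
  finally show ?thesis by (simp add: push_count_def)
qed

lemma push_count_eq_sum_hit_sets:
  "push_count \<sigma> B x = (\<Sum>k<max_length \<sigma>. indicator (hit_set \<sigma> k B) x)"
proof -
  have "(\<Sum>k<max_length \<sigma>. indicator (hit_set \<sigma> k B) x :: ennreal)
      = (\<Sum>k<max_length \<sigma>. if k \<in> {..<length (\<sigma> (x 1))} then indicator B (shifted_subst \<sigma> k x) else 0)"
    by (intro sum.cong) (auto simp: hit_set_def indicator_def)
  also have "\<dots> = (\<Sum>k\<in>{..<max_length \<sigma>} \<inter> {..<length (\<sigma> (x 1))}. indicator B (shifted_subst \<sigma> k x))"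
    by (rule sum.inter_restrict[symmetric]) simp
  also have "{..<max_length \<sigma>} \<inter> {..<length (\<sigma> (x 1))} = {..<length (\<sigma> (x 1))}"
    using length_le_max_length[of \<sigma> "x 1"] by auto
  finally show ?thesis by (simp add: push_count_eq_sum)
qed

lemma push_count_le_max_length: "push_count \<sigma> B x \<le> of_nat (max_length \<sigma>)"
proof -
  have "card {k. k < length (\<sigma> (x 1)) \<and> (shift ^^ k) (subst_seq \<sigma> x) \<in> B} \<le> card {..<length (\<sigma> (x 1))}"
    by (intro card_mono) auto
  also have "\<dots> \<le> max_length \<sigma>" using length_le_max_length by simp
  finally show ?thesis unfolding push_count_def by simp
qed

lemma push_count_measurable:
  fixes \<sigma> :: "'a::finite \<Rightarrow> 'b list"
  assumes ne: "non_erasing \<sigma>" and B: "B \<in> sets shift_borel"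
  shows "push_count \<sigma> B \<in> borel_measurable shift_borel"
proof -
  have "push_count \<sigma> B = (\<lambda>x. \<Sum>k<max_length \<sigma>. indicator (hit_set \<sigma> k B) x)"
    by (rule ext) (rule push_count_eq_sum_hit_sets)
  then show ?thesis using hit_set_in_shift_borel[OF ne B] by (simp add: borel_measurable_sum)
qed

lemma nn_set_integral_push_count:
  assumes s: "sets \<mu> = sets shift_borel" and ne: "non_erasing \<sigma>"
    and X: "X \<in> sets shift_borel" and B: "B \<in> sets shift_borel"
  shows "(\<integral>\<^sup>+ x \<in> X. push_count \<sigma> B x \<partial>\<mu>) = (\<Sum>k<max_length \<sigma>. emeasure \<mu> (hit_set \<sigma> k B \<inter> X))"
proof -
  have "(\<integral>\<^sup>+ x \<in> X. push_count \<sigma> B x \<partial>\<mu>)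
      = (\<integral>\<^sup>+ x. (\<Sum>k<max_length \<sigma>. indicator (hit_set \<sigma> k B \<inter> X) x) \<partial>\<mu>)"
    by (intro nn_integral_cong)
      (simp add: push_count_eq_sum_hit_sets sum_distrib_right indicator_inter_arith)
  also have "\<dots> = (\<Sum>k<max_length \<sigma>. emeasure \<mu> (hit_set \<sigma> k B \<inter> X))"
    using hit_set_in_shift_borel[OF ne B] X s by (subst nn_integral_sum) auto
  finally show ?thesis .
qed

lemma countably_additive_push:
  fixes \<sigma> :: "'a::finite \<Rightarrow> 'b list"
  assumes s: "sets \<mu> = sets shift_borel" and ne: "non_erasing \<sigma>" and X: "X \<in> sets shift_borel"
  shows "countably_additive (sets shift_borel) (\<lambda>B. \<integral>\<^sup>+ x \<in> X. push_count \<sigma> B x \<partial>\<mu>)"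
  unfolding countably_additive_def
proof (intro allI impI)
  fix A :: "nat \<Rightarrow> (int \<Rightarrow> 'b) set"
  assume A: "range A \<subseteq> sets shift_borel" "disjoint_family A" "\<Union> (range A) \<in> sets shift_borel"
  have hit: "range (\<lambda>i. hit_set \<sigma> k (A i) \<inter> X) \<subseteq> sets \<mu>" for k
    using A(1) hit_set_in_shift_borel[OF ne] X s by auto
  have disj: "disjoint_family (\<lambda>i. hit_set \<sigma> k (A i) \<inter> X)" for k
    using A(2) unfolding disjoint_family_on_def hit_set_def by auto
  have "(\<Sum>i. \<integral>\<^sup>+ x \<in> X. push_count \<sigma> (A i) x \<partial>\<mu>)
      = (\<Sum>i. \<Sum>k<max_length \<sigma>. emeasure \<mu> (hit_set \<sigma> k (A i) \<inter> X))"
    using A by (intro suminf_cong nn_set_integral_push_count[OF s ne X]) auto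
  also have "\<dots> = (\<Sum>k<max_length \<sigma>. \<Sum>i. emeasure \<mu> (hit_set \<sigma> k (A i) \<inter> X))"
    by (rule suminf_sum) simp
  also have "\<dots> = (\<Sum>k<max_length \<sigma>. emeasure \<mu> (\<Union>i. hit_set \<sigma> k (A i) \<inter> X))"
    using hit disj by (intro sum.cong refl suminf_emeasure)
  also have "(\<lambda>k. \<Union>i. hit_set \<sigma> k (A i) \<inter> X) = (\<lambda>k. hit_set \<sigma> k (\<Union>i. A i) \<inter> X)"
    by (auto simp: hit_set_def)
  also have "(\<Sum>k<max_length \<sigma>. emeasure \<mu> (hit_set \<sigma> k (\<Union>i. A i) \<inter> X))
      = (\<integral>\<^sup>+ x \<in> X. push_count \<sigma> (\<Union>i. A i) x \<partial>\<mu>)"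
    using A by (intro nn_set_integral_push_count[symmetric, OF s ne X]) auto
  finally show "(\<Sum>i. \<integral>\<^sup>+ x \<in> X. push_count \<sigma> (A i) x \<partial>\<mu>)
      = (\<integral>\<^sup>+ x \<in> X. push_count \<sigma> (\<Union> (range A)) x \<partial>\<mu>)" .
qed

lemma sets_push_measure [simp]: "sets (push_measure \<sigma> X \<mu>) = sets shift_borel"
  unfolding push_measure_def
  by (simp add: sets_measure_of_conv sigma_algebra.sigma_sets_eq[OF sigma_algebra_shift_borel])

lemma emeasure_push_measure:
  fixes \<sigma> :: "'a::finite \<Rightarrow> 'b list"
  assumes "sets \<mu> = sets shift_borel" "non_erasing \<sigma>" "X \<in> sets shift_borel" "B \<in> sets shift_borel"
  shows "emeasure (push_measure \<sigma> X \<mu>) B = (\<integral>\<^sup>+ x \<in> X. push_count \<sigma> B x \<partial>\<mu>)"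
  unfolding push_measure_def
  by (rule emeasure_measure_of_sigma[OF sigma_algebra_shift_borel _ countably_additive_push[OF assms(1-3)]
        assms(4)]) (simp add: positive_def push_count_def)

section \<open>\<open>\<sigma>\<^sub>M(\<mu>)\<close> is an invariant measure on the generated subshift\<close>

text \<open>With \<open>L = |\<sigma>(x\<^sub>1)|\<close>, the left-hand side counts the \<open>0 \<le> k \<le> L\<close> with
  \<open>T\<^sup>k \<sigma>(x) \<in> B\<close>, since \<open>T\<^sup>L \<sigma>(x) = \<sigma>(T x)\<close>; so does the right-hand side.\<close>

lemma push_count_vimage_shift:
  assumes ne: "non_erasing \<sigma>"
  shows "push_count \<sigma> (shift -` B) x + indicator B (subst_seq \<sigma> x)
       = push_count \<sigma> B x + indicator B (subst_seq \<sigma> (shift x))"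
proof -
  let ?L = "length (\<sigma> (x 1))"
  let ?f = "\<lambda>k. indicator B (shifted_subst \<sigma> k x) :: ennreal"
  have "push_count \<sigma> (shift -` B) x = (\<Sum>k<?L. ?f (Suc k))"
    by (simp add: push_count_eq_sum shifted_subst_Suc indicator_def)
  moreover have "?f 0 = indicator B (subst_seq \<sigma> x)" by (simp add: shifted_subst_0)
  moreover have "?f ?L = indicator B (subst_seq \<sigma> (shift x))" by (simp add: shifted_subst_length[OF ne])
  moreover have "(\<Sum>k<?L. ?f (Suc k)) + ?f 0 = (\<Sum>k<?L. ?f k) + ?f ?L"
    using sum.lessThan_Suc_shift[of ?f ?L] sum.lessThan_Suc[of ?f ?L] by (simp add: add.commute)
  ultimately show ?thesis by (simp add: push_count_eq_sum)
qed

lemma push_integral_vimage_shift: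
  fixes \<sigma> :: "'a::finite \<Rightarrow> 'b list"
  assumes ne: "non_erasing \<sigma>" and X: "subshift X" and \<mu>: "\<mu> \<in> inv_measures X"
    and B: "B \<in> sets shift_borel"
  shows "(\<integral>\<^sup>+ x \<in> X. push_count \<sigma> (shift -` B) x \<partial>\<mu>) = (\<integral>\<^sup>+ x \<in> X. push_count \<sigma> B x \<partial>\<mu>)"
proof -
  note sets_\<mu> = inv_measuresD(1)[OF \<mu>]
  have meas: "f \<in> borel_measurable shift_borel \<Longrightarrow> (\<lambda>x. f x * indicator X x) \<in> borel_measurable \<mu>"
    for f :: "_ \<Rightarrow> ennreal"
    using subshift_in_shift_borel[OF X] by (simp add: measurable_cong_sets[OF sets_\<mu> refl])
  have ind: "(\<lambda>x. indicator B (subst_seq \<sigma> x) :: ennreal) \<in> borel_measurable shift_borel"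
    using measurable_compose[OF uniformly_local_measurable[OF uniformly_local_subst_seq[OF ne]]
        borel_measurable_indicator[OF B]] .
  have Bs: "shift -` B \<in> sets shift_borel"
    using measurable_sets[OF measurable_shift B] by simp
  define c where "c = (\<integral>\<^sup>+ x \<in> X. indicator B (subst_seq \<sigma> x) \<partial>\<mu>)"
  have "c \<le> (\<integral>\<^sup>+ x. 1 \<partial>\<mu>)" unfolding c_def by (intro nn_integral_mono) (simp add: indicator_def)
  then have "c \<noteq> \<infinity>"
    using finite_measure.emeasure_finite[OF inv_measuresD(3)[OF \<mu>]] by (auto simp: top_unique)
  moreover have "(\<integral>\<^sup>+ x \<in> X. push_count \<sigma> (shift -` B) x \<partial>\<mu>) + c
      = (\<integral>\<^sup>+ x \<in> X. push_count \<sigma> (shift -` B) x + indicator B (subst_seq \<sigma> x) \<partial>\<mu>)"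
    unfolding c_def distrib_right using push_count_measurable[OF ne Bs] ind
    by (intro nn_integral_add[symmetric] meas) auto
  moreover have "\<dots> = (\<integral>\<^sup>+ x \<in> X. push_count \<sigma> B x + indicator B (subst_seq \<sigma> (shift x)) \<partial>\<mu>)"
    by (simp add: push_count_vimage_shift[OF ne])
  moreover have "\<dots> = (\<integral>\<^sup>+ x \<in> X. push_count \<sigma> B x \<partial>\<mu>) + c"
    unfolding c_def distrib_right nn_set_integral_comp_shift[OF \<mu> X ind, symmetric]
    using push_count_measurable[OF ne B] measurable_compose[OF measurable_shift ind]
    by (intro nn_integral_add meas) auto
  ultimately show ?thesis by (metis ennreal_add_left_cancel add.commute)
qed

lemma push_measure_finite:
  fixes \<sigma> :: "'a::finite \<Rightarrow> 'b list"
  assumes ne: "non_erasing \<sigma>" and X: "subshift X" and \<mu>: "\<mu> \<in> inv_measures X"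
  shows "finite_measure (push_measure \<sigma> X \<mu>)"
proof (rule finite_measureI)
  note \<mu>' = inv_measuresD[OF \<mu>]
  have "emeasure (push_measure \<sigma> X \<mu>) UNIV = (\<integral>\<^sup>+ x \<in> X. push_count \<sigma> UNIV x \<partial>\<mu>)"
    using subshift_in_shift_borel[OF X] sets.top[of shift_borel]
    by (intro emeasure_push_measure[OF \<mu>'(1) ne]) auto
  also have "\<dots> \<le> (\<integral>\<^sup>+ x. of_nat (max_length \<sigma>) \<partial>\<mu>)"
    using push_count_le_max_length[of \<sigma> UNIV] by (intro nn_integral_mono) (simp add: indicator_def)
  also have "\<dots> < \<infinity>"
    using finite_measure.emeasure_finite[OF \<mu>'(3)] \<mu>'(2)
    by (simp add: ennreal_mult_less_top of_nat_less_top top.not_eq_extremum)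
  finally show "emeasure (push_measure \<sigma> X \<mu>) (space (push_measure \<sigma> X \<mu>)) \<noteq> \<infinity>"
    using sets_eq_imp_space_eq[OF sets_push_measure[of \<sigma> X \<mu>]] by simp
qed

lemma push_measure_shift_invariant:
  fixes \<sigma> :: "'a::finite \<Rightarrow> 'b list"
  assumes ne: "non_erasing \<sigma>" and X: "subshift X" and \<mu>: "\<mu> \<in> inv_measures X"
    and B: "B \<in> sets shift_borel"
  shows "emeasure (push_measure \<sigma> X \<mu>) (shift -` B) = emeasure (push_measure \<sigma> X \<mu>) B"
proof -
  have "shift -` B \<in> sets shift_borel" using measurable_sets[OF measurable_shift B] by simp
  then show ?thesis
    using emeasure_push_measure[OF inv_measuresD(1)[OF \<mu>] ne subshift_in_shift_borel[OF X]] B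
      push_integral_vimage_shift[OF ne X \<mu> B] by simp
qed

lemma push_measure_null_outside:
  fixes \<sigma> :: "'a::finite \<Rightarrow> 'b list"
  assumes ne: "non_erasing \<sigma>" and X: "subshift X" and \<mu>: "\<mu> \<in> inv_measures X"
  shows "emeasure (push_measure \<sigma> X \<mu>) (UNIV - generated_subshift \<sigma> X) = 0"
proof -
  let ?Y = "generated_subshift \<sigma> X"
  have "UNIV - ?Y \<in> sets shift_borel"
    using subshift_in_shift_borel[OF subshift_generated_subshift] by (metis sets.compl_sets space_shift_borel)
  moreover have "(\<lambda>x. push_count \<sigma> (UNIV - ?Y) x * indicator X x) = (\<lambda>x. 0)"
  proof (rule ext, cases)
    fix x assume "x \<in> X"
    then have "{k. k < length (\<sigma> (x 1)) \<and> (shift ^^ k) (subst_seq \<sigma> x) \<in> UNIV - ?Y} = {}"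
      using shifted_subst_in_generated_subshift[of x X \<sigma>] by (auto simp: shifted_subst_def)
    then show "push_count \<sigma> (UNIV - ?Y) x * indicator X x = 0" by (simp add: push_count_def)
  qed simp
  ultimately show ?thesis
    using emeasure_push_measure[OF inv_measuresD(1)[OF \<mu>] ne subshift_in_shift_borel[OF X]] by simp
qed

lemma push_measure_in_inv_measures:
  fixes \<sigma> :: "'a::finite \<Rightarrow> 'b list"
  assumes "non_erasing \<sigma>" and "subshift X" and "\<mu> \<in> inv_measures X"
  shows "push_measure \<sigma> X \<mu> \<in> inv_measures (generated_subshift \<sigma> X)"
  using push_measure_finite[OF assms] push_measure_shift_invariant[OF assms]
    push_measure_null_outside[OF assms]
  by (simp add: inv_measures_def)

section \<open>Functoriality\<close>

lemma sum_lessThan_add: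
  fixes f :: "nat \<Rightarrow> 'a::comm_monoid_add"
  shows "(\<Sum>i<m + n. f i) = (\<Sum>i<m. f i) + (\<Sum>k<n. f (m + k))"
  by (induction n) (simp_all add: add.assoc)

lemma nat_cumlen_Suc:
  assumes ne: "non_erasing \<sigma>"
  shows "nat (cumlen \<sigma> z (int (Suc j))) = nat (cumlen \<sigma> z (int j)) + length (\<sigma> (z (1 + int j)))"
proof -
  have "cumlen \<sigma> z (int j) \<ge> 0" using cumlen_ge_id[OF ne, of "int j" z] by simp
  moreover have "cumlen \<sigma> z (int (Suc j)) = cumlen \<sigma> z (int j) + int (length (\<sigma> (z (1 + int j))))"
    using cumlen_step[of \<sigma> z "int j + 1"] by (simp add: add.commute)
  ultimately show ?thesis by (simp add: nat_add_distrib)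
qed

lemma sum_push_count_orbit:
  assumes ne: "non_erasing \<sigma>"
  shows "(\<Sum>j<M. push_count \<sigma> B ((shift ^^ j) z))
       = (\<Sum>i<nat (cumlen \<sigma> z (int M)). indicator B ((shift ^^ i) (subst_seq \<sigma> z)))"
proof (induction M)
  case (Suc M)
  let ?f = "\<lambda>i. indicator B ((shift ^^ i) (subst_seq \<sigma> z)) :: ennreal"
  let ?c = "nat (cumlen \<sigma> z (int M))"
  have "shifted_subst \<sigma> k ((shift ^^ M) z) = (shift ^^ (?c + k)) (subst_seq \<sigma> z)" for k
    by (simp add: shifted_subst_def subst_seq_funpow_shift[OF ne] funpow_add add.commute)
  then have "push_count \<sigma> B ((shift ^^ M) z) = (\<Sum>k<length (\<sigma> (z (1 + int M))). ?f (?c + k))"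
    by (simp add: push_count_eq_sum funpow_shift_apply add.commute)
  then show ?case using Suc nat_cumlen_Suc[OF ne, of z M] sum_lessThan_add[of ?f ?c] by simp
qed simp

lemma sum_push_count_morph_comp:
  assumes ne: "non_erasing \<sigma>" and ne': "non_erasing \<sigma>'"
  shows "(\<Sum>j<length (\<sigma>' (x 1)). push_count \<sigma> B (shifted_subst \<sigma>' j x))
       = push_count (morph_comp \<sigma> \<sigma>') B x"
proof -
  let ?z = "subst_seq \<sigma>' x"
  have "(\<Sum>j<length (\<sigma>' (x 1)). push_count \<sigma> B (shifted_subst \<sigma>' j x))
      = (\<Sum>i<nat (cumlen \<sigma> ?z (int (length (\<sigma>' (x 1))))). indicator B ((shift ^^ i) (subst_seq \<sigma> ?z)))"
    unfolding shifted_subst_def by (rule sum_push_count_orbit[OF ne])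
  also have "int (length (\<sigma>' (x 1))) = cumlen \<sigma>' x 1" using cumlen_step[of \<sigma>' x 1] by simp
  also have "cumlen \<sigma> ?z (cumlen \<sigma>' x 1) = cumlen (morph_comp \<sigma> \<sigma>') x 1"
    by (rule cumlen_morph_comp[OF ne'])
  also have "\<dots> = int (length (morph_comp \<sigma> \<sigma>' (x 1)))"
    using cumlen_step[of "morph_comp \<sigma> \<sigma>'" x 1] by simp
  also have "subst_seq \<sigma> ?z = subst_seq (morph_comp \<sigma> \<sigma>') x"
    by (rule subst_seq_morph_comp[OF ne ne', symmetric])
  finally show ?thesis by (simp add: push_count_eq_sum shifted_subst_def)
qed

lemma sum_push_count_hit_sets_morph_comp:
  assumes ne: "non_erasing \<sigma>" and ne': "non_erasing \<sigma>'" and x: "x \<in> X'"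
  shows "(\<Sum>k<max_length \<sigma>. push_count \<sigma>' (hit_set \<sigma> k B \<inter> generated_subshift \<sigma>' X') x)
       = push_count (morph_comp \<sigma> \<sigma>') B x"
proof -
  let ?X = "generated_subshift \<sigma>' X'"
  have "(\<Sum>k<max_length \<sigma>. push_count \<sigma>' (hit_set \<sigma> k B \<inter> ?X) x)
      = (\<Sum>j<length (\<sigma>' (x 1)). \<Sum>k<max_length \<sigma>. indicator (hit_set \<sigma> k B \<inter> ?X) (shifted_subst \<sigma>' j x))"
    by (simp add: push_count_eq_sum sum.swap[of _ "{..<max_length \<sigma>}"])
  also have "\<dots> = (\<Sum>j<length (\<sigma>' (x 1)). push_count \<sigma> B (shifted_subst \<sigma>' j x))"
    using shifted_subst_in_generated_subshift[OF x, of \<sigma>']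
    by (intro sum.cong refl) (simp add: push_count_eq_sum_hit_sets indicator_inter_arith)
  also have "\<dots> = push_count (morph_comp \<sigma> \<sigma>') B x" by (rule sum_push_count_morph_comp[OF ne ne'])
  finally show ?thesis .
qed

lemma push_measure_morph_comp:
  fixes \<sigma> :: "'a::finite \<Rightarrow> 'b::finite list" and \<sigma>' :: "'c::finite \<Rightarrow> 'a list"
  assumes ne: "non_erasing \<sigma>" and ne': "non_erasing \<sigma>'" and X': "subshift X'"
    and X: "X = generated_subshift \<sigma>' X'" and \<mu>: "\<mu> \<in> inv_measures X'"
  shows "push_measure (morph_comp \<sigma> \<sigma>') X' \<mu> = push_measure \<sigma> X (push_measure \<sigma>' X' \<mu>)"
proof -
  let ?\<nu> = "push_measure \<sigma>' X' \<mu>"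
  note sets_\<mu> = inv_measuresD(1)[OF \<mu>]
  have X'_sets: "X' \<in> sets shift_borel" by (rule subshift_in_shift_borel[OF X'])
  have X_sets: "X \<in> sets shift_borel" unfolding X by (rule subshift_in_shift_borel[OF subshift_generated_subshift])
  have "(\<integral>\<^sup>+ x \<in> X. push_count \<sigma> B x \<partial>?\<nu>) = (\<integral>\<^sup>+ x \<in> X'. push_count (morph_comp \<sigma> \<sigma>') B x \<partial>\<mu>)"
    if B: "B \<in> sets shift_borel" for B
  proof -
    have hit: "hit_set \<sigma> k B \<inter> X \<in> sets shift_borel" for k
      using hit_set_in_shift_borel[OF ne B] X_sets by blast
    have "(\<integral>\<^sup>+ x \<in> X. push_count \<sigma> B x \<partial>?\<nu>) = (\<Sum>k<max_length \<sigma>. emeasure ?\<nu> (hit_set \<sigma> k B \<inter> X))"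
      by (rule nn_set_integral_push_count[OF sets_push_measure ne X_sets B])
    also have "\<dots> = (\<Sum>k<max_length \<sigma>. \<integral>\<^sup>+ x \<in> X'. push_count \<sigma>' (hit_set \<sigma> k B \<inter> X) x \<partial>\<mu>)"
      by (intro sum.cong refl emeasure_push_measure[OF sets_\<mu> ne' X'_sets] hit)
    also have "\<dots> = (\<integral>\<^sup>+ x \<in> X'. (\<Sum>k<max_length \<sigma>. push_count \<sigma>' (hit_set \<sigma> k B \<inter> X) x) \<partial>\<mu>)"
      unfolding sum_distrib_right using push_count_measurable[OF ne' hit] X'_sets
      by (intro nn_integral_sum[symmetric]) (auto simp: measurable_cong_sets[OF sets_\<mu> refl])
    also have "\<dots> = (\<integral>\<^sup>+ x \<in> X'. push_count (morph_comp \<sigma> \<sigma>') B x \<partial>\<mu>)"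
      unfolding X by (intro nn_integral_cong) (simp add: sum_push_count_hit_sets_morph_comp[OF ne ne']
          indicator_def)
    finally show ?thesis .
  qed
  then show ?thesis
    unfolding push_measure_def[of "morph_comp \<sigma> \<sigma>'"] push_measure_def[of \<sigma>]
    by (intro measure_of_eq) (auto simp: sigma_algebra.sigma_sets_eq[OF sigma_algebra_shift_borel])
qed

section \<open>Points of the generated subshift\<close>

definition subst_orbit :: "('a \<Rightarrow> 'b list) \<Rightarrow> (int \<Rightarrow> 'a) set \<Rightarrow> (int \<Rightarrow> 'b) set" where
  "subst_orbit \<sigma> X = {shifted_subst \<sigma> k x | x k. x \<in> X \<and> k < length (\<sigma> (x 1))}"

lemma closedin_subst_orbit:
  fixes \<sigma> :: "'a::finite \<Rightarrow> 'b list"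
  assumes ne: "non_erasing \<sigma>" and X: "closedin shift_top X"
  shows "closedin shift_top (subst_orbit \<sigma> X)"
proof -
  let ?X = "\<lambda>k. X \<inter> {x. k < length (\<sigma> (x 1))}"
  have "subst_orbit \<sigma> X = (\<Union>k<max_length \<sigma>. shifted_subst \<sigma> k ` ?X k)"
    unfolding subst_orbit_def using length_le_max_length[of \<sigma>] by (auto intro: less_le_trans)
  moreover have "closedin shift_top (shifted_subst \<sigma> k ` ?X k)" for k
  proof -
    have "compactin shift_top (?X k)"
      using closedin_Int[OF X closedin_local_set[OF local_set_length_gt]]
      by (rule closedin_compact_space[OF compact_space_shift_top])
    then have "compactin shift_top (shifted_subst \<sigma> k ` ?X k)"
      by (rule image_compactin[OF _ uniformly_local_continuous_map[OF uniformly_local_shifted_subst[OF ne]]])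
    then show ?thesis by (rule compactin_imp_closedin[OF Hausdorff_space_shift_top])
  qed
  ultimately show ?thesis by (auto intro: closedin_Union)
qed

lemma shift_in_subst_orbit:
  assumes ne: "non_erasing \<sigma>" and X: "subshift X" and z: "z \<in> subst_orbit \<sigma> X"
  shows "shift z \<in> subst_orbit \<sigma> X"
proof -
  obtain x k where xk: "x \<in> X" "k < length (\<sigma> (x 1))" "shift z = shifted_subst \<sigma> (Suc k) x"
    using z unfolding subst_orbit_def by (auto simp: shifted_subst_Suc)
  show ?thesis
  proof (cases "Suc k < length (\<sigma> (x 1))")
    case True
    then show ?thesis using xk unfolding subst_orbit_def by blast
  next
    case False
    then have "Suc k = length (\<sigma> (x 1))" using xk by simp
    then have "shift z = shifted_subst \<sigma> 0 (shift x)"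
      using xk shifted_subst_length[OF ne, of x] by (simp add: shifted_subst_0)
    moreover have "shift x \<in> X" using xk subshift_shift_iff[OF X] by simp
    ultimately show ?thesis using ne unfolding subst_orbit_def non_erasing_def by blast
  qed
qed

lemma subst_orbit_subset_shift_image:
  assumes ne: "non_erasing \<sigma>" and X: "subshift X"
  shows "subst_orbit \<sigma> X \<subseteq> shift ` subst_orbit \<sigma> X"
proof
  fix z assume "z \<in> subst_orbit \<sigma> X"
  then obtain x k where xk: "x \<in> X" "k < length (\<sigma> (x 1))" "z = shifted_subst \<sigma> k x"
    unfolding subst_orbit_def by blast
  show "z \<in> shift ` subst_orbit \<sigma> X"
  proof (cases k)
    case (Suc k')
    then have "z = shift (shifted_subst \<sigma> k' x)" using xk by (simp add: shifted_subst_Suc)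
    moreover have "shifted_subst \<sigma> k' x \<in> subst_orbit \<sigma> X"
      using xk Suc unfolding subst_orbit_def by force
    ultimately show ?thesis by blast
  next
    case 0
    let ?x = "unshift x" and ?L = "length (\<sigma> (unshift x 1))"
    have "?x \<in> X" using xk subshift_shift_iff[OF X, of ?x] by simp
    moreover have "0 < ?L" using ne by (simp add: non_erasing_def)
    moreover have "z = shift (shifted_subst \<sigma> (?L - 1) ?x)"
      using xk 0 shifted_subst_length[OF ne, of ?x] \<open>0 < ?L\<close>
      by (simp add: shifted_subst_0 flip: shifted_subst_Suc)
    ultimately show ?thesis unfolding subst_orbit_def by force
  qed
qed

lemma generated_subshift_subset_subst_orbit:
  fixes \<sigma> :: "'a::finite \<Rightarrow> 'b list"
  assumes ne: "non_erasing \<sigma>" and X: "subshift X"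
  shows "generated_subshift \<sigma> X \<subseteq> subst_orbit \<sigma> X"
proof (rule generated_subshift_least)
  show "subshift (subst_orbit \<sigma> X)"
    using closedin_subst_orbit[OF ne] shift_in_subst_orbit[OF ne X] subst_orbit_subset_shift_image[OF ne X] X
    by (auto simp: subshift_def)
  show "subst_seq \<sigma> ` X \<subseteq> subst_orbit \<sigma> X"
    using ne unfolding subst_orbit_def non_erasing_def by (force simp: shifted_subst_0)
qed

section \<open>Orbit averages\<close>

definition covering_blocks :: "('a \<Rightarrow> 'b list) \<Rightarrow> (int \<Rightarrow> 'a) \<Rightarrow> nat \<Rightarrow> nat \<Rightarrow> nat" where
  "covering_blocks \<sigma> x k N = (LEAST M. N + k \<le> nat (cumlen \<sigma> x (int M)))"

lemma covering_blocks_ge: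
  assumes ne: "non_erasing \<sigma>"
  shows "N + k \<le> nat (cumlen \<sigma> x (int (covering_blocks \<sigma> x k N)))"
proof -
  have "N + k \<le> nat (cumlen \<sigma> x (int (N + k)))"
    using cumlen_ge_id[OF ne, of "int (N + k)" x] by simp
  then show ?thesis unfolding covering_blocks_def by (rule LeastI)
qed

lemma covering_blocks_lt:
  fixes \<sigma> :: "'a::finite \<Rightarrow> 'b list"
  assumes ne: "non_erasing \<sigma>"
  shows "nat (cumlen \<sigma> x (int (covering_blocks \<sigma> x k N))) < N + k + max_length \<sigma>"
proof (cases "covering_blocks \<sigma> x k N")
  case 0
  then have "N + k \<le> 0" using covering_blocks_ge[OF ne, of N k x] by simp
  then show ?thesis using 0 max_length_pos[OF ne] by simp
next
  case (Suc M1)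
  have "\<not> N + k \<le> nat (cumlen \<sigma> x (int M1))"
  proof
    assume "N + k \<le> nat (cumlen \<sigma> x (int M1))"
    then have "covering_blocks \<sigma> x k N \<le> M1" unfolding covering_blocks_def by (rule Least_le)
    then show False using Suc by simp
  qed
  moreover have "cumlen \<sigma> x (int (Suc M1)) = cumlen \<sigma> x (int M1 + 1)" by (simp add: add.commute)
  moreover have "cumlen \<sigma> x (int M1 + 1) = cumlen \<sigma> x (int M1) + block_length \<sigma> x (int M1 + 1)"
    using cumlen_step[of \<sigma> x "int M1 + 1"] by simp
  moreover have "block_length \<sigma> x (int M1 + 1) \<le> int (max_length \<sigma>)" using length_le_max_length[of \<sigma>] by simp
  moreover have "cumlen \<sigma> x (int M1) \<ge> 0" using cumlen_ge_id[OF ne, of "int M1" x] by simp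
  ultimately have "cumlen \<sigma> x (int (Suc M1)) < int (N + k + max_length \<sigma>)" by linarith
  moreover have "cumlen \<sigma> x (int (Suc M1)) \<ge> 0" using cumlen_ge_id[OF ne, of "int (Suc M1)" x] by simp
  ultimately have "nat (cumlen \<sigma> x (int (Suc M1))) < N + k + max_length \<sigma>" by (simp add: nat_less_iff)
  then show ?thesis using Suc by simp
qed

lemma covering_blocks_le:
  fixes \<sigma> :: "'a::finite \<Rightarrow> 'b list"
  assumes ne: "non_erasing \<sigma>"
  shows "covering_blocks \<sigma> x k N < N + k + max_length \<sigma>"
  using covering_blocks_lt[OF ne, of x k N] cumlen_ge_id[OF ne, of "int (covering_blocks \<sigma> x k N)" x] by linarith

definition visits :: "(int \<Rightarrow> 'a) \<Rightarrow> nat \<Rightarrow> (int \<Rightarrow> 'a) set \<Rightarrow> real" where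
  "visits x M A = (\<Sum>m<M. indicator A ((shift ^^ m) x))"

lemma visits_nonneg: "0 \<le> visits x M A"
  unfolding visits_def by (simp add: sum_nonneg)

lemma visits_le: "visits x M A \<le> real M"
proof -
  have "visits x M A \<le> (\<Sum>m<M. 1)" unfolding visits_def by (intro sum_mono) (simp add: indicator_def)
  then show ?thesis by simp
qed

lemma visits_Un: "A \<inter> B = {} \<Longrightarrow> visits x M (A \<union> B) = visits x M A + visits x M B"
  unfolding visits_def by (simp add: indicator_disj_union sum.distrib)

lemma visits_vimage_shift: "\<bar>visits x M (shift -` A) - visits x M A\<bar> \<le> 1"
proof -
  let ?f = "\<lambda>m. indicator A ((shift ^^ m) x) :: real"
  have "visits x M (shift -` A) - visits x M A = (\<Sum>m<M. ?f (Suc m) - ?f m)"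
    unfolding visits_def by (simp add: sum_subtractf indicator_vimage)
  also have "\<dots> = ?f M - ?f 0" by (rule sum_lessThan_telescope)
  finally show ?thesis by (simp add: indicator_def)
qed

lemma visits_outside:
  assumes "subshift X" "x \<in> X" "A \<inter> X = {}"
  shows "visits x M A = 0"
proof -
  have "(shift ^^ m) x \<notin> A" for m using subshift_funpow_shift[OF assms(1,2)] assms(3) by blast
  then show ?thesis by (simp add: visits_def)
qed

lemma visits_funpow_shift:
  "visits ((shift ^^ k) y) N B = (\<Sum>t\<in>{k..<k + N}. indicator B ((shift ^^ t) y))"
proof -
  have "(\<Sum>t\<in>{k..<k + N}. indicator B ((shift ^^ t) y)) = (\<Sum>m\<in>{0..<N}. indicator B ((shift ^^ (m + k)) y) :: real)"
    using sum.shift_bounds_nat_ivl[of "\<lambda>t. indicator B ((shift ^^ t) y)" 0 k N] by (simp add: add.commute)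
  then show ?thesis by (simp add: visits_def lessThan_atLeast0 funpow_add)
qed

lemma visits_window:
  assumes "k + N \<le> C" and "C \<le> k + N + D"
  shows "0 \<le> visits y C B - visits ((shift ^^ k) y) N B"
    and "visits y C B - visits ((shift ^^ k) y) N B \<le> real (k + D)"
proof -
  let ?f = "\<lambda>t. indicator B ((shift ^^ t) y) :: real"
  have sub: "{k..<k + N} \<subseteq> {..<C}" using assms(1) by auto
  have eq: "visits y C B - visits ((shift ^^ k) y) N B = (\<Sum>t\<in>{..<C} - {k..<k + N}. ?f t)"
    unfolding visits_funpow_shift using sum_diff[OF _ sub, of ?f] by (simp add: visits_def)
  show "0 \<le> visits y C B - visits ((shift ^^ k) y) N B"
    unfolding eq by (intro sum_nonneg) simp
  have "(\<Sum>t\<in>{..<C} - {k..<k + N}. ?f t) \<le> real (card ({..<C} - {k..<k + N}))"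
    using sum_mono[of "{..<C} - {k..<k + N}" ?f "\<lambda>_. 1"] by (simp add: indicator_def)
  also have "card ({..<C} - {k..<k + N}) = C - N" using card_Diff_subset[OF _ sub] by simp
  finally show "visits y C B - visits ((shift ^^ k) y) N B \<le> real (k + D)"
    unfolding eq using assms(2) by simp
qed

text \<open>The letters of \<open>\<sigma>(x)\<close> covered by the first \<open>covering_blocks \<sigma> x k N\<close> blocks contain the
  window \<open>k, \<dots>, k + N - 1\<close> and fewer than \<open>2 L\<close> further letters, \<open>L\<close> the maximal block length.\<close>

lemma visits_covering_blocks:
  fixes \<sigma> :: "'a::finite \<Rightarrow> 'b list" and x :: "int \<Rightarrow> 'a" and N :: nat
  assumes ne: "non_erasing \<sigma>" and k: "k < max_length \<sigma>"
  defines "C \<equiv> nat (cumlen \<sigma> x (int (covering_blocks \<sigma> x k N)))"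
  shows "0 \<le> visits (subst_seq \<sigma> x) C B - visits (shifted_subst \<sigma> k x) N B"
    and "visits (subst_seq \<sigma> x) C B - visits (shifted_subst \<sigma> k x) N B \<le> 2 * real (max_length \<sigma>)"
proof -
  have "k + N \<le> C" "C \<le> k + N + max_length \<sigma>"
    using covering_blocks_ge[OF ne, of N k x] covering_blocks_lt[OF ne, of x k N] by (simp_all add: C_def)
  from visits_window[OF this, of "subst_seq \<sigma> x" B] k
  show "0 \<le> visits (subst_seq \<sigma> x) C B - visits (shifted_subst \<sigma> k x) N B"
    and "visits (subst_seq \<sigma> x) C B - visits (shifted_subst \<sigma> k x) N B \<le> 2 * real (max_length \<sigma>)"
    by (simp_all add: shifted_subst_def)
qed

lemma sum_visits_hit_sets:
  fixes \<sigma> :: "'a::finite \<Rightarrow> 'b list"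
  assumes ne: "non_erasing \<sigma>"
  shows "(\<Sum>k<max_length \<sigma>. visits x M (hit_set \<sigma> k B)) = visits (subst_seq \<sigma> x) (nat (cumlen \<sigma> x (int M))) B"
proof -
  have "ennreal (\<Sum>k<max_length \<sigma>. visits x M (hit_set \<sigma> k B))
      = (\<Sum>k<max_length \<sigma>. \<Sum>m<M. indicator (hit_set \<sigma> k B) ((shift ^^ m) x))"
    unfolding visits_def by (simp add: sum_nonneg ennreal_indicator flip: sum_ennreal)
  also have "\<dots> = (\<Sum>m<M. push_count \<sigma> B ((shift ^^ m) x))"
    by (subst sum.swap) (simp add: push_count_eq_sum_hit_sets)
  also have "\<dots> = (\<Sum>t<nat (cumlen \<sigma> x (int M)). indicator B ((shift ^^ t) (subst_seq \<sigma> x)))"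
    by (rule sum_push_count_orbit[OF ne])
  also have "\<dots> = ennreal (visits (subst_seq \<sigma> x) (nat (cumlen \<sigma> x (int M))) B)"
    unfolding visits_def by (simp add: ennreal_indicator flip: sum_ennreal)
  finally show ?thesis by (simp add: sum_nonneg visits_nonneg)
qed

text \<open>A finite family of orbit segments of points \<open>x i\<close>, weighted by \<open>w i\<close> and long enough
  for their images to cover the letters \<open>k i, \<dots>, k i + N - 1\<close> of \<open>\<sigma>(x i)\<close>, normalised by \<open>N\<close>.\<close>

definition orbit_average :: "('a \<Rightarrow> 'b list) \<Rightarrow> 'i set \<Rightarrow> ('i \<Rightarrow> real) \<Rightarrow> ('i \<Rightarrow> int \<Rightarrow> 'a)
    \<Rightarrow> ('i \<Rightarrow> nat) \<Rightarrow> nat \<Rightarrow> (int \<Rightarrow> 'a) set \<Rightarrow> real" where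
  "orbit_average \<sigma> I w x k N A = (\<Sum>i\<in>I. w i * visits (x i) (covering_blocks \<sigma> (x i) (k i) N) A) / real N"

lemma orbit_average_nonneg: "(\<And>i. i \<in> I \<Longrightarrow> 0 \<le> w i) \<Longrightarrow> 0 \<le> orbit_average \<sigma> I w x k N A"
  unfolding orbit_average_def by (intro divide_nonneg_nonneg sum_nonneg mult_nonneg_nonneg visits_nonneg) auto

lemma orbit_average_le:
  fixes \<sigma> :: "'a::finite \<Rightarrow> 'b list"
  assumes ne: "non_erasing \<sigma>" and w: "\<And>i. i \<in> I \<Longrightarrow> 0 \<le> w i"
    and k: "\<And>i. i \<in> I \<Longrightarrow> k i \<le> max_length \<sigma>" and N: "1 \<le> N"
  shows "orbit_average \<sigma> I w x k N A \<le> (\<Sum>i\<in>I. w i) * (1 + 2 * real (max_length \<sigma>))"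
proof -
  have "real (max_length \<sigma>) \<le> real N * real (max_length \<sigma>)" using N by (simp add: mult_le_cancel_right1)
  moreover have "real N * (1 + 2 * real (max_length \<sigma>)) = real N + 2 * (real N * real (max_length \<sigma>))"
    by (simp add: algebra_simps)
  ultimately have bound: "real N + 2 * real (max_length \<sigma>) \<le> real N * (1 + 2 * real (max_length \<sigma>))"
    by linarith
  have "visits (x i) (covering_blocks \<sigma> (x i) (k i) N) A \<le> real N * (1 + 2 * real (max_length \<sigma>))"
    if "i \<in> I" for i
  proof -
    have "visits (x i) (covering_blocks \<sigma> (x i) (k i) N) A \<le> real (covering_blocks \<sigma> (x i) (k i) N)"
      by (rule visits_le)
    also have "\<dots> \<le> real N + 2 * real (max_length \<sigma>)"
      using covering_blocks_le[OF ne, of "x i" "k i" N] k[OF that] by simp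
    finally show ?thesis using bound by linarith
  qed
  then have "(\<Sum>i\<in>I. w i * visits (x i) (covering_blocks \<sigma> (x i) (k i) N) A)
      \<le> (\<Sum>i\<in>I. w i * (real N * (1 + 2 * real (max_length \<sigma>))))"
    using w by (intro sum_mono mult_left_mono) auto
  then have "(\<Sum>i\<in>I. w i * visits (x i) (covering_blocks \<sigma> (x i) (k i) N) A)
      \<le> real N * ((\<Sum>i\<in>I. w i) * (1 + 2 * real (max_length \<sigma>)))"
    by (simp add: sum_distrib_left sum_distrib_right mult_ac)
  then show ?thesis unfolding orbit_average_def using N by (simp add: divide_le_eq mult.commute)
qed

lemma orbit_average_Un:
  "A \<inter> B = {} \<Longrightarrow> orbit_average \<sigma> I w x k N (A \<union> B) = orbit_average \<sigma> I w x k N A + orbit_average \<sigma> I w x k N B"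
  unfolding orbit_average_def by (simp add: visits_Un sum.distrib distrib_left add_divide_distrib)

lemma orbit_average_vimage_shift:
  assumes w: "\<And>i. i \<in> I \<Longrightarrow> 0 \<le> w i" and N: "1 \<le> N"
  shows "\<bar>orbit_average \<sigma> I w x k N (shift -` A) - orbit_average \<sigma> I w x k N A\<bar> \<le> (\<Sum>i\<in>I. w i) / real N"
proof -
  let ?v = "\<lambda>i A. visits (x i) (covering_blocks \<sigma> (x i) (k i) N) A"
  have "\<bar>\<Sum>i\<in>I. w i * (?v i (shift -` A) - ?v i A)\<bar> \<le> (\<Sum>i\<in>I. \<bar>w i * (?v i (shift -` A) - ?v i A)\<bar>)"
    by (rule sum_abs)
  also have "\<dots> \<le> (\<Sum>i\<in>I. w i)"
  proof (intro sum_mono)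
    fix i assume "i \<in> I"
    then show "\<bar>w i * (?v i (shift -` A) - ?v i A)\<bar> \<le> w i"
      using w[of i] visits_vimage_shift[of "x i" _ A] by (simp add: abs_mult mult_left_le)
  qed
  finally show ?thesis
    unfolding orbit_average_def using N
    by (simp add: diff_divide_distrib[symmetric] sum_subtractf right_diff_distrib divide_right_mono)
qed

lemma orbit_average_outside:
  "subshift X \<Longrightarrow> (\<And>i. i \<in> I \<Longrightarrow> x i \<in> X) \<Longrightarrow> A \<inter> X = {} \<Longrightarrow> orbit_average \<sigma> I w x k N A = 0"
  unfolding orbit_average_def by (simp add: visits_outside)

text \<open>Pushing an orbit average forward through \<open>\<sigma>\<close> gives, up to an error of order \<open>1/N\<close>, the
  weighted average over the orbit segments of length \<open>N\<close> starting at the points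
  \<open>T\<^bsup>k i\<^esup> \<sigma>(x i)\<close>.\<close>

lemma orbit_average_hit_sets:
  fixes \<sigma> :: "'a::finite \<Rightarrow> 'b list"
  assumes ne: "non_erasing \<sigma>" and w: "\<And>i. i \<in> I \<Longrightarrow> 0 \<le> w i"
    and k: "\<And>i. i \<in> I \<Longrightarrow> k i < max_length \<sigma>" and N: "1 \<le> N"
  shows "\<bar>(\<Sum>k'<max_length \<sigma>. orbit_average \<sigma> I w x k N (hit_set \<sigma> k' B))
      - (\<Sum>i\<in>I. w i * visits (shifted_subst \<sigma> (k i) (x i)) N B) / real N\<bar>
     \<le> 2 * real (max_length \<sigma>) * (\<Sum>i\<in>I. w i) / real N"
proof -
  let ?d = "\<lambda>i. visits (subst_seq \<sigma> (x i)) (nat (cumlen \<sigma> (x i) (int (covering_blocks \<sigma> (x i) (k i) N)))) B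
      - visits (shifted_subst \<sigma> (k i) (x i)) N B"
  have "(\<Sum>k'<max_length \<sigma>. orbit_average \<sigma> I w x k N (hit_set \<sigma> k' B))
      = (\<Sum>i\<in>I. w i * visits (subst_seq \<sigma> (x i))
          (nat (cumlen \<sigma> (x i) (int (covering_blocks \<sigma> (x i) (k i) N)))) B) / real N"
    unfolding orbit_average_def sum_divide_distrib[symmetric]
    by (subst sum.swap) (simp add: sum_distrib_left[symmetric] sum_visits_hit_sets[OF ne])
  then have "(\<Sum>k'<max_length \<sigma>. orbit_average \<sigma> I w x k N (hit_set \<sigma> k' B))
      - (\<Sum>i\<in>I. w i * visits (shifted_subst \<sigma> (k i) (x i)) N B) / real N
      = (\<Sum>i\<in>I. w i * ?d i) / real N"
    by (simp add: diff_divide_distrib[symmetric] sum_subtractf right_diff_distrib)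
  moreover have "0 \<le> (\<Sum>i\<in>I. w i * ?d i)"
    using visits_covering_blocks(1)[OF ne k] w by (intro sum_nonneg mult_nonneg_nonneg) auto
  moreover have "(\<Sum>i\<in>I. w i * ?d i) \<le> (\<Sum>i\<in>I. w i * (2 * real (max_length \<sigma>)))"
    using visits_covering_blocks(2)[OF ne k] w by (intro sum_mono mult_left_mono) auto
  ultimately show ?thesis using N
    by (simp add: sum_distrib_right[symmetric] mult.commute divide_right_mono)
qed

section \<open>Measures determined by local sets\<close>

lemma measure_eq_on_local_sets:
  assumes M: "sets M = sets shift_borel" "emeasure M UNIV \<noteq> \<infinity>"
    and N: "sets N = sets shift_borel"
    and eq: "\<And>A. A \<in> local_sets \<Longrightarrow> emeasure M A = emeasure N A"
  shows "M = N"
proof (rule measure_eqI_generator_eq[OF Int_stable_local_sets, where \<Omega> = UNIV and A = "\<lambda>_. UNIV"])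
  show "sets M = sigma_sets UNIV local_sets" "sets N = sigma_sets UNIV local_sets"
    using M N by (simp_all add: sets_shift_borel)
qed (use M eq in auto)

lemma emeasure_compl_eq_0_if_local:
  assumes M: "sets M = sets shift_borel" and X: "closedin shift_top X"
    and null: "\<And>A. A \<in> local_sets \<Longrightarrow> A \<inter> X = {} \<Longrightarrow> emeasure M A = 0"
  shows "emeasure M (UNIV - X) = 0"
proof -
  have U: "openin shift_top (UNIV - X)" using X by (simp add: closedin_def)
  have "emeasure M (\<Union>n. {x. cylinder n x \<subseteq> UNIV - X}) = 0"
  proof (rule emeasure_UN_eq_0)
    show "range (\<lambda>n. {x. cylinder n x \<subseteq> UNIV - X}) \<subseteq> sets M"
      using openin_eq_Union_local_sets(2)[OF U] M local_set_in_shift_borel by auto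
    fix n
    have "{x. cylinder n x \<subseteq> UNIV - X} \<inter> X = {}" using cylinder_self by blast
    then show "emeasure M {x. cylinder n x \<subseteq> UNIV - X} = 0"
      using openin_eq_Union_local_sets(2)[OF U] by (intro null) (auto simp: local_sets_def)
  qed
  then show ?thesis using openin_eq_Union_local_sets(1)[OF U] by simp
qed

lemma emeasure_vimage_funpow_shift:
  assumes \<nu>: "\<nu> \<in> inv_measures Y" and B: "B \<in> sets shift_borel"
  shows "emeasure \<nu> ((shift ^^ j) -` B) = emeasure \<nu> B"
proof (induction j)
  case (Suc j)
  have "(shift ^^ j) -` B \<in> sets shift_borel"
    using measurable_sets[OF uniformly_local_measurable[OF uniformly_local_funpow_shift] B] by simp
  have "emeasure \<nu> ((shift ^^ Suc j) -` B) = emeasure \<nu> (shift -` ((shift ^^ j) -` B))"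
    by (simp only: funpow_Suc_right vimage_comp)
  also have "\<dots> = emeasure \<nu> ((shift ^^ j) -` B)"
    by (rule inv_measuresD(4)[OF \<nu>]) fact
  also have "\<dots> = emeasure \<nu> B" by (rule Suc.IH)
  finally show ?case .
qed simp

text \<open>On the cylinders of a fixed window, a local set is either full or empty, so it is
  measured by any choice of one point per cylinder.\<close>

lemma sum_cylinders_measure:
  fixes \<nu> :: "(int \<Rightarrow> 'b::finite) measure"
  assumes \<nu>: "\<nu> \<in> inv_measures Y" and Y: "Y \<in> sets shift_borel"
    and D: "local_set n D" and p: "\<And>C. C \<in> cylinders n Y \<Longrightarrow> p C \<in> C"
  shows "(\<Sum>C\<in>cylinders n Y. measure \<nu> C * indicator D (p C)) = measure \<nu> D"
proof -
  note \<nu>' = inv_measuresD[OF \<nu>]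
  interpret finite_measure \<nu> by (rule \<nu>'(3))
  have C_sets: "C \<in> sets \<nu>" if "C \<in> cylinders n Y" for C
    using that \<nu>'(1) local_set_in_shift_borel[OF local_set_cylinder] unfolding cylinders_def by auto
  have D_sets: "D \<in> sets \<nu>" using \<nu>'(1) local_set_in_shift_borel[OF D] by simp
  have "D \<inter> C = (if p C \<in> D then C else {})" if C: "C \<in> cylinders n Y" for C
  proof -
    have "C = cylinder n (p C)" using C p[OF C] cylinder_eq unfolding cylinders_def by blast
    then show ?thesis using D unfolding local_set_def cylinder_def by auto
  qed
  then have "(\<Sum>C\<in>cylinders n Y. measure \<nu> C * indicator D (p C))
      = (\<Sum>C\<in>cylinders n Y. measure \<nu> (D \<inter> C))"
    by (intro sum.cong refl) (simp add: indicator_def)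
  also have "\<dots> = measure \<nu> (\<Union>C\<in>cylinders n Y. D \<inter> C)"
  proof (intro finite_measure_finite_Union[symmetric])
    show "disjoint_family_on (\<lambda>C. D \<inter> C) (cylinders n Y)"
      unfolding disjoint_family_on_def using cylinders_disjoint[of _ n Y] by blast
  qed (use finite_cylinders C_sets D_sets in auto)
  also have "(\<Union>C\<in>cylinders n Y. D \<inter> C) = D - (UNIV - \<Union>(cylinders n Y))" by blast
  also have "measure \<nu> (D - (UNIV - \<Union>(cylinders n Y))) = measure \<nu> D"
  proof -
    have U: "\<Union>(cylinders n Y) \<in> sets \<nu>" using finite_cylinders C_sets by (intro sets.finite_Union) auto
    have "emeasure \<nu> (UNIV - \<Union>(cylinders n Y)) \<le> emeasure \<nu> (UNIV - Y)"
      using cylinders_cover[of Y n] Y \<nu>'(1) sets.compl_sets[of Y shift_borel]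
      by (intro emeasure_mono) auto
    then have "UNIV - \<Union>(cylinders n Y) \<in> null_sets \<nu>"
      using \<nu>'(2,5) sets.compl_sets[OF U] by (auto simp: null_sets_def)
    then show ?thesis using D_sets by (simp add: measure_def emeasure_Diff_null_set)
  qed
  finally show ?thesis .
qed

locale local_content =
  fixes c :: "(int \<Rightarrow> 'a::finite) set \<Rightarrow> real"
  assumes nonneg: "\<And>A. A \<in> local_sets \<Longrightarrow> 0 \<le> c A"
    and additive: "\<And>A B. A \<in> local_sets \<Longrightarrow> B \<in> local_sets \<Longrightarrow> A \<inter> B = {} \<Longrightarrow> c (A \<union> B) = c A + c B"
begin

lemma empty: "c {} = 0"
  using additive[of "{}" "{}"] by simp

lemma UN_lessThan:
  fixes A :: "nat \<Rightarrow> (int \<Rightarrow> 'a) set" and n :: nat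
  assumes A: "\<And>i. A i \<in> local_sets" and disj: "disjoint_family A"
  shows "(\<Union>i<n. A i) \<in> local_sets \<and> c (\<Union>i<n. A i) = (\<Sum>i<n. c (A i))"
proof (induction n)
  case (Suc n)
  have "A i \<inter> A n = {}" if "i < n" for i
    using disjoint_family_onD[OF disj, of i n] that by simp
  then have "(\<Union>i<n. A i) \<inter> A n = {}" by auto
  moreover have L: "(\<Union>i<n. A i) \<in> local_sets" using Suc.IH by blast
  moreover have "(\<Union>i<Suc n. A i) = (\<Union>i<n. A i) \<union> A n" by (auto simp: lessThan_Suc)
  ultimately show ?case using Suc.IH local_sets_Un[OF L A] additive[OF L A] by simp
qed (simp add: empty)

text \<open>Countable additivity comes for free: by compactness, a disjoint family of local sets with
  local union has only finitely many non-empty members.\<close>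

lemma countably_additive: "countably_additive local_sets (\<lambda>A. ennreal (c A))"
  unfolding countably_additive_def
proof (intro allI impI)
  fix A :: "nat \<Rightarrow> (int \<Rightarrow> 'a) set"
  assume A: "range A \<subseteq> local_sets" "disjoint_family A" "\<Union> (range A) \<in> local_sets"
  obtain n where n: "\<And>i. i \<ge> n \<Longrightarrow> A i = {}"
    using local_sets_disjoint_eventually_empty[OF A] by blast
  have "A i \<subseteq> (\<Union>i<n. A i)" for i using n[of i] by (cases "i < n") auto
  then have U: "\<Union> (range A) = (\<Union>i<n. A i)" by blast
  have "(\<Sum>i. ennreal (c (A i))) = (\<Sum>i<n. ennreal (c (A i)))"
    by (rule suminf_finite) (auto simp: n empty)
  also have "\<dots> = ennreal (\<Sum>i<n. c (A i))"
    using A(1) nonneg by (intro sum_ennreal) auto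
  also have "(\<Sum>i<n. c (A i)) = c (\<Union> (range A))"
    using UN_lessThan[of A n] A(1,2) unfolding U by (simp add: image_subset_iff)
  finally show "(\<Sum>i. ennreal (c (A i))) = ennreal (c (\<Union> (range A)))" .
qed

lemma extends:
  obtains \<mu> where "sets \<mu> = sets shift_borel" and "\<And>A. A \<in> local_sets \<Longrightarrow> emeasure \<mu> A = c A"
proof -
  have "positive local_sets (\<lambda>A. ennreal (c A))"
    by (simp add: positive_def empty)
  then obtain \<mu>' where \<mu>': "\<forall>A\<in>local_sets. \<mu>' A = ennreal (c A)"
    and ms: "measure_space UNIV (sigma_sets UNIV local_sets) \<mu>'"
    using ring_of_sets.caratheodory'[OF ring_of_sets_local_sets _ countably_additive] by blast
  let ?\<mu> = "measure_of UNIV (sigma_sets UNIV local_sets) \<mu>'"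
  show thesis
  proof (rule that)
    show "sets ?\<mu> = sets shift_borel"
      by (simp add: sets_measure_of_conv sigma_sets_sigma_sets_eq sets_shift_borel)
    fix A :: "(int \<Rightarrow> 'a) set" assume "A \<in> local_sets"
    then show "emeasure ?\<mu> A = c A"
      using ms \<mu>' by (subst emeasure_measure_of_sigma) (auto simp: measure_space_def)
  qed
qed

end

section \<open>Surjectivity\<close>

lemma bounded_diagonal_convergent:
  fixes f :: "nat \<Rightarrow> nat \<Rightarrow> real"
  assumes bdd: "\<And>n k. \<bar>f k n\<bar> \<le> M"
  shows "\<exists>d. strict_mono (d :: nat \<Rightarrow> nat) \<and> (\<forall>n. convergent (\<lambda>k. f (d k) n))"
proof -
  let ?P = "\<lambda>n s. convergent (\<lambda>k. f (s k) n)"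
  interpret diag: subseqs ?P
  proof (unfold convergent_def, unfold subseqs_def, auto)
    fix n :: nat and s :: "nat \<Rightarrow> nat"
    have "\<And>k. f (s k) n \<in> {-M..M}" using bdd by (simp add: abs_le_iff minus_le_iff)
    then have "\<exists>l s'. strict_mono s' \<and> ((\<lambda>k. f (s k) n) \<circ> s') \<longlonglongrightarrow> l"
      using compact_Icc compact_imp_seq_compact seq_compactE by metis
    then show "\<exists>s'. strict_mono (s' :: nat \<Rightarrow> nat) \<and> (\<exists>l. (\<lambda>k. f (s (s' k)) n) \<longlonglongrightarrow> l)"
      by (auto simp: comp_def)
  qed
  have "?P n diag.diagseq" for n
  proof -
    have reassoc: "(\<lambda>k. f ((diag.seqseq (Suc n) \<circ> (\<lambda>k. diag.fold_reduce (Suc n) k (Suc n + k))) k) n)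
        = (\<lambda>k. f (diag.seqseq (Suc n) k) n) \<circ> (\<lambda>k. diag.fold_reduce (Suc n) k (Suc n + k))"
      by auto
    have "?P n (diag.diagseq \<circ> ((+) (Suc n)))"
      unfolding diag.diagseq_seqseq reassoc
      by (intro convergent_subseq_convergent diag.seqseq_holds diag.subseq_diagonal_rest)
    then obtain L where "(\<lambda>k. f (diag.diagseq (k + Suc n)) n) \<longlonglongrightarrow> L"
      by (auto simp: add.commute dest: convergentD)
    then have "(\<lambda>k. f (diag.diagseq k) n) \<longlonglongrightarrow> L" by (rule LIMSEQ_offset)
    then show ?thesis by (auto simp: convergent_def)
  qed
  then show ?thesis using diag.subseq_diagseq by blast
qed

lemma LIMSEQ_eq_if_close:
  fixes X :: "nat \<Rightarrow> real"
  assumes X: "X \<longlonglongrightarrow> L" and close: "\<And>k. k \<ge> k0 \<Longrightarrow> \<bar>X k - c\<bar> \<le> C / real (Suc k)"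
  shows "L = c"
proof -
  have g: "(\<lambda>k. C / real (Suc k)) \<longlonglongrightarrow> 0"
    using tendsto_mult[OF tendsto_const[of C] LIMSEQ_inverse_real_of_nat] by (simp add: divide_inverse)
  have "eventually (\<lambda>k. norm (X k - c) \<le> C / real (Suc k)) sequentially"
    using close by (auto simp: eventually_sequentially)
  then have "(\<lambda>k. X k - c) \<longlonglongrightarrow> 0" by (rule Lim_null_comparison[OF _ g])
  then have "X \<longlonglongrightarrow> c" by (simp add: LIM_zero_iff)
  then show ?thesis using X LIMSEQ_unique by blast
qed

text \<open>Given \<open>\<nu>\<close> on \<open>Y\<close>, cut \<open>Y\<close> into the cylinders \<open>C\<close> of radius \<open>2(n + 1)\<close> and write a
  point of each as \<open>T\<^bsup>k\<^sub>C\<^esup> \<sigma>(x\<^sub>C)\<close>. Spreading the mass \<open>\<nu>(C)\<close> uniformly over the part of the orbit of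
  \<open>x\<^sub>C\<close> that covers the next \<open>n + 1\<close> letters gives an almost invariant measure on \<open>X\<close> whose
  push-forward almost agrees with \<open>\<nu>\<close> on sets of radius at most \<open>n + 1\<close>. A subsequence converges on
  all local sets; its limit is the required preimage.\<close>

locale inv_measure_lift =
  fixes \<sigma> :: "'a::finite \<Rightarrow> 'b::finite list" and X :: "(int \<Rightarrow> 'a) set"
    and \<nu> :: "(int \<Rightarrow> 'b) measure"
  assumes non_erasing: "non_erasing \<sigma>" and subshift: "subshift X"
    and \<nu>: "\<nu> \<in> inv_measures (generated_subshift \<sigma> X)"
begin

abbreviation "Y \<equiv> generated_subshift \<sigma> X"

abbreviation "mass \<equiv> measure \<nu> UNIV"

lemma Y_in_shift_borel: "Y \<in> sets shift_borel"
  by (rule subshift_in_shift_borel[OF subshift_generated_subshift])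

definition base_point :: "(int \<Rightarrow> 'b) set \<Rightarrow> (int \<Rightarrow> 'a) \<times> nat" where
  "base_point C =
     (SOME p. fst p \<in> X \<and> snd p < length (\<sigma> (fst p 1)) \<and> shifted_subst \<sigma> (snd p) (fst p) \<in> C)"

lemma base_point:
  assumes "C \<in> cylinders n Y"
  shows "fst (base_point C) \<in> X" and "snd (base_point C) < max_length \<sigma>"
    and "shifted_subst \<sigma> (snd (base_point C)) (fst (base_point C)) \<in> C"
proof -
  obtain y where "y \<in> Y" "C = cylinder n y" using assms unfolding cylinders_def by blast
  then obtain x k where "x \<in> X" "k < length (\<sigma> (x 1))" "shifted_subst \<sigma> k x \<in> C"
    using generated_subshift_subset_subst_orbit[OF non_erasing subshift] cylinder_self[of y n]
    unfolding subst_orbit_def by blast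
  then have "\<exists>p. fst p \<in> X \<and> snd p < length (\<sigma> (fst p 1)) \<and> shifted_subst \<sigma> (snd p) (fst p) \<in> C"
    by (intro exI[of _ "(x, k)"]) simp
  from someI_ex[OF this] show "fst (base_point C) \<in> X" "snd (base_point C) < max_length \<sigma>"
    "shifted_subst \<sigma> (snd (base_point C)) (fst (base_point C)) \<in> C"
    unfolding base_point_def[symmetric] using length_le_max_length less_le_trans by blast+
qed

lemma sum_cylinders_mass: "(\<Sum>C\<in>cylinders n Y. measure \<nu> C) = mass"
  using sum_cylinders_measure[OF \<nu> Y_in_shift_borel, of n UNIV
      "\<lambda>C. shifted_subst \<sigma> (snd (base_point C)) (fst (base_point C))"] base_point(3)
  by (simp add: local_set_def)

definition approx :: "nat \<Rightarrow> (int \<Rightarrow> 'a) set \<Rightarrow> real" where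
  "approx n A = orbit_average \<sigma> (cylinders (2 * Suc n) Y) (\<lambda>C. measure \<nu> C)
     (\<lambda>C. fst (base_point C)) (\<lambda>C. snd (base_point C)) (Suc n) A"

lemma approx_nonneg: "0 \<le> approx n A"
  unfolding approx_def by (rule orbit_average_nonneg) simp

lemma approx_le: "approx n A \<le> mass * (1 + 2 * real (max_length \<sigma>))"
  unfolding approx_def
  using orbit_average_le[OF non_erasing, of "cylinders (2 * Suc n) Y" "\<lambda>C. measure \<nu> C"]
    base_point(2) sum_cylinders_mass by (simp add: less_imp_le)

lemma approx_Un: "A \<inter> B = {} \<Longrightarrow> approx n (A \<union> B) = approx n A + approx n B"
  unfolding approx_def by (rule orbit_average_Un)

lemma approx_vimage_shift: "\<bar>approx n (shift -` A) - approx n A\<bar> \<le> mass / real (Suc n)"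
  unfolding approx_def
  using orbit_average_vimage_shift[of "cylinders (2 * Suc n) Y" "\<lambda>C. measure \<nu> C" "Suc n"]
    sum_cylinders_mass by simp

lemma approx_outside: "A \<inter> X = {} \<Longrightarrow> approx n A = 0"
  unfolding approx_def by (rule orbit_average_outside[OF subshift]) (use base_point(1) in auto)

lemma approx_hit_sets:
  assumes B: "local_set r B" and r: "r \<le> Suc n"
  shows "\<bar>(\<Sum>k<max_length \<sigma>. approx n (hit_set \<sigma> k B)) - measure \<nu> B\<bar>
      \<le> 2 * real (max_length \<sigma>) * mass / real (Suc n)"
proof -
  let ?I = "cylinders (2 * Suc n) Y" and ?w = "\<lambda>C. measure \<nu> C"
  let ?y = "\<lambda>C. shifted_subst \<sigma> (snd (base_point C)) (fst (base_point C))"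
  have "(\<Sum>C\<in>?I. ?w C * visits (?y C) (Suc n) B)
      = (\<Sum>C\<in>?I. \<Sum>j<Suc n. ?w C * indicator ((shift ^^ j) -` B) (?y C))"
    unfolding visits_def sum_distrib_left by (intro sum.cong refl) (simp add: indicator_def)
  also have "\<dots> = (\<Sum>j<Suc n. \<Sum>C\<in>?I. ?w C * indicator ((shift ^^ j) -` B) (?y C))"
    by (rule sum.swap)
  also have "\<dots> = (\<Sum>j<Suc n. measure \<nu> ((shift ^^ j) -` B))"
  proof (intro sum.cong refl sum_cylinders_measure[OF \<nu> Y_in_shift_borel] base_point(3))
    fix j assume "j \<in> {..<Suc n}"
    then show "local_set (2 * Suc n) ((shift ^^ j) -` B)"
      using r local_set_mono[OF local_set_vimage_funpow_shift[OF B]] by simp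
  qed
  also have "\<dots> = real (Suc n) * measure \<nu> B"
    using emeasure_vimage_funpow_shift[OF \<nu> local_set_in_shift_borel[OF B]] by (simp add: measure_def)
  finally show ?thesis
    using orbit_average_hit_sets[OF non_erasing, of ?I ?w "\<lambda>C. snd (base_point C)" "Suc n"
        "\<lambda>C. fst (base_point C)" B] base_point(2) sum_cylinders_mass
    unfolding approx_def by simp
qed

definition subseq :: "nat \<Rightarrow> nat" where
  "subseq = (SOME d. strict_mono d \<and> (\<forall>n. convergent (\<lambda>k. approx (d k) (from_nat_into local_sets n))))"

lemma subseq: "strict_mono subseq" "\<And>n. convergent (\<lambda>k. approx (subseq k) (from_nat_into local_sets n))"
proof -
  have "\<bar>approx k A\<bar> \<le> mass * (1 + 2 * real (max_length \<sigma>))" for k A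
    using approx_nonneg approx_le by simp
  then have "\<exists>d. strict_mono d \<and> (\<forall>n. convergent (\<lambda>k. approx (d k) (from_nat_into local_sets n)))"
    by (intro bounded_diagonal_convergent)
  from someI_ex[OF this]
  show "strict_mono subseq" "\<And>n. convergent (\<lambda>k. approx (subseq k) (from_nat_into local_sets n))"
    unfolding subseq_def[symmetric] by blast+
qed

lemma le_subseq: "k \<le> subseq k"
  using seq_suble[OF subseq(1)] .

definition content :: "(int \<Rightarrow> 'a) set \<Rightarrow> real" where
  "content A = lim (\<lambda>k. approx (subseq k) A)"

lemma approx_LIMSEQ_content:
  assumes "A \<in> local_sets"
  shows "(\<lambda>k. approx (subseq k) A) \<longlonglongrightarrow> content A"
proof -
  obtain n where "A = from_nat_into local_sets n"
    using assms countable_local_sets by (metis from_nat_into_surj)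
  then show ?thesis using subseq(2) unfolding content_def by (simp add: convergent_LIMSEQ_iff)
qed

lemma content_nonneg: "A \<in> local_sets \<Longrightarrow> 0 \<le> content A"
  using approx_LIMSEQ_content by (rule LIMSEQ_le_const) (use approx_nonneg in auto)

lemma content_Un:
  assumes "A \<in> local_sets" "B \<in> local_sets" "A \<inter> B = {}"
  shows "content (A \<union> B) = content A + content B"
proof -
  have "(\<lambda>k. approx (subseq k) (A \<union> B)) \<longlonglongrightarrow> content A + content B"
    using tendsto_add[OF approx_LIMSEQ_content approx_LIMSEQ_content] assms approx_Un by simp
  then show ?thesis using approx_LIMSEQ_content[OF local_sets_Un] assms LIMSEQ_unique by blast
qed

lemma content_vimage_shift:
  assumes A: "A \<in> local_sets"
  shows "content (shift -` A) = content A"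
proof -
  have "shift -` A \<in> local_sets"
    using A local_sets_vimage_funpow_shift[of A 1] by simp
  have "content (shift -` A) - content A = 0"
  proof (rule LIMSEQ_eq_if_close)
    show "(\<lambda>k. approx (subseq k) (shift -` A) - approx (subseq k) A)
        \<longlonglongrightarrow> content (shift -` A) - content A"
      using A \<open>shift -` A \<in> local_sets\<close> by (intro tendsto_diff approx_LIMSEQ_content)
    fix k :: nat
    have "\<bar>approx (subseq k) (shift -` A) - approx (subseq k) A\<bar> \<le> mass / real (Suc (subseq k))"
      by (rule approx_vimage_shift)
    also have "\<dots> \<le> mass / real (Suc k)"
      using le_subseq[of k] by (intro divide_left_mono) auto
    finally show "\<bar>approx (subseq k) (shift -` A) - approx (subseq k) A - 0\<bar> \<le> mass / real (Suc k)"
      by simp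
  qed
  then show ?thesis by simp
qed

lemma content_outside:
  assumes "A \<in> local_sets" "A \<inter> X = {}"
  shows "content A = 0"
proof -
  have "(\<lambda>k. approx (subseq k) A) \<longlonglongrightarrow> 0" using approx_outside[OF assms(2)] by simp
  then show ?thesis using approx_LIMSEQ_content[OF assms(1)] LIMSEQ_unique by blast
qed

lemma sum_content_hit_sets:
  assumes B: "B \<in> local_sets"
  shows "(\<Sum>k<max_length \<sigma>. content (hit_set \<sigma> k B)) = measure \<nu> B"
proof -
  obtain r where r: "local_set r B" using B unfolding local_sets_def by blast
  show ?thesis
  proof (rule LIMSEQ_eq_if_close)
    show "(\<lambda>i. \<Sum>k<max_length \<sigma>. approx (subseq i) (hit_set \<sigma> k B))
        \<longlonglongrightarrow> (\<Sum>k<max_length \<sigma>. content (hit_set \<sigma> k B))"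
      by (intro tendsto_sum approx_LIMSEQ_content hit_set_local[OF non_erasing B])
    fix i assume "r \<le> i"
    then have "\<bar>(\<Sum>k<max_length \<sigma>. approx (subseq i) (hit_set \<sigma> k B)) - measure \<nu> B\<bar>
        \<le> 2 * real (max_length \<sigma>) * mass / real (Suc (subseq i))"
      using le_subseq[of i] by (intro approx_hit_sets[OF r]) simp
    also have "\<dots> \<le> 2 * real (max_length \<sigma>) * mass / real (Suc i)"
      using le_subseq[of i] by (intro divide_left_mono) auto
    finally show "\<bar>(\<Sum>k<max_length \<sigma>. approx (subseq i) (hit_set \<sigma> k B)) - measure \<nu> B\<bar>
        \<le> 2 * real (max_length \<sigma>) * mass / real (Suc i)" .
  qed
qed

definition lift :: "(int \<Rightarrow> 'a) measure" where
  "lift = (SOME \<mu>. sets \<mu> = sets shift_borel \<and> (\<forall>A\<in>local_sets. emeasure \<mu> A = content A))"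

lemma sets_lift: "sets lift = sets shift_borel"
  and emeasure_lift: "A \<in> local_sets \<Longrightarrow> emeasure lift A = content A"
proof -
  obtain \<mu> where "sets \<mu> = sets shift_borel" "\<And>A. A \<in> local_sets \<Longrightarrow> emeasure \<mu> A = content A"
    using local_content.extends[of content] content_nonneg content_Un
    unfolding local_content_def by blast
  then have "\<exists>\<mu>. sets \<mu> = sets shift_borel \<and> (\<forall>A\<in>local_sets. emeasure \<mu> A = content A)" by blast
  from someI_ex[OF this] show "sets lift = sets shift_borel"
    and "A \<in> local_sets \<Longrightarrow> emeasure lift A = content A"
    unfolding lift_def[symmetric] by auto
qed

lemma lift_in_inv_measures: "lift \<in> inv_measures X"
proof -
  have space: "space lift = UNIV" using sets_eq_imp_space_eq[OF sets_lift] by simp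
  have fin: "emeasure lift UNIV \<noteq> \<infinity>" using emeasure_lift[OF local_sets_UNIV] by simp
  have shift: "shift \<in> lift \<rightarrow>\<^sub>M shift_borel"
    using measurable_shift by (simp add: measurable_cong_sets[OF sets_lift refl])
  have "distr lift shift_borel shift = lift"
  proof (rule measure_eq_on_local_sets)
    show "emeasure (distr lift shift_borel shift) UNIV \<noteq> \<infinity>"
      using emeasure_distr[OF shift sets.top[of shift_borel]] fin space by simp
    fix A :: "(int \<Rightarrow> 'a) set" assume A: "A \<in> local_sets"
    then have "shift -` A \<in> local_sets" using local_sets_vimage_funpow_shift[of A 1] by simp
    then show "emeasure (distr lift shift_borel shift) A = emeasure lift A"
      using emeasure_distr[OF shift local_sets_in_shift_borel[OF A]] space A
      by (simp add: emeasure_lift content_vimage_shift)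
  qed (simp_all add: sets_lift)
  then have "emeasure lift (shift -` B) = emeasure lift B" if "B \<in> sets shift_borel" for B
    using emeasure_distr[OF shift that] space by simp
  moreover have "emeasure lift (UNIV - X) = 0"
    using subshift unfolding subshift_def
    by (intro emeasure_compl_eq_0_if_local[OF sets_lift]) (simp_all add: emeasure_lift content_outside)
  ultimately show ?thesis
    using sets_lift fin space by (simp add: inv_measures_def finite_measureI)
qed

lemma push_measure_lift: "push_measure \<sigma> X lift = \<nu>"
proof (rule measure_eq_on_local_sets)
  note \<nu>' = inv_measuresD[OF \<nu>]
  have X_sets: "X \<in> sets shift_borel" by (rule subshift_in_shift_borel[OF subshift])
  have null: "UNIV - X \<in> null_sets lift"
    using inv_measuresD(5)[OF lift_in_inv_measures] X_sets sets_lift sets.compl_sets[OF X_sets]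
    by (auto simp: null_sets_def)
  show "emeasure (push_measure \<sigma> X lift) UNIV \<noteq> \<infinity>"
    using finite_measure.emeasure_finite[OF push_measure_finite[OF non_erasing subshift
          lift_in_inv_measures], of UNIV] by simp
  fix B :: "(int \<Rightarrow> 'b) set" assume B: "B \<in> local_sets"
  have hit: "hit_set \<sigma> k B \<in> local_sets" for k by (rule hit_set_local[OF non_erasing B])
  have "emeasure (push_measure \<sigma> X lift) B = (\<Sum>k<max_length \<sigma>. emeasure lift (hit_set \<sigma> k B \<inter> X))"
    using emeasure_push_measure[OF sets_lift non_erasing X_sets] nn_set_integral_push_count[OF sets_lift
        non_erasing X_sets] local_sets_in_shift_borel[OF B] by simp
  also have "\<dots> = (\<Sum>k<max_length \<sigma>. ennreal (content (hit_set \<sigma> k B)))"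
  proof (intro sum.cong refl)
    fix k
    have "hit_set \<sigma> k B \<inter> X = hit_set \<sigma> k B - (UNIV - X)" by blast
    then show "emeasure lift (hit_set \<sigma> k B \<inter> X) = ennreal (content (hit_set \<sigma> k B))"
      using emeasure_Diff_null_set[OF null] local_sets_in_shift_borel[OF hit] sets_lift emeasure_lift[OF hit]
      by simp
  qed
  also have "\<dots> = ennreal (measure \<nu> B)"
    using content_nonneg[OF hit] sum_content_hit_sets[OF B] by (simp add: sum_ennreal)
  also have "\<dots> = emeasure \<nu> B"
    using finite_measure.emeasure_eq_measure[OF \<nu>'(3)] by simp
  finally show "emeasure (push_measure \<sigma> X lift) B = emeasure \<nu> B" .
qed (simp_all add: inv_measuresD(1)[OF \<nu>])

end

lemma push_measure_surj:
  fixes \<sigma> :: "'a::finite \<Rightarrow> 'b::finite list"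
  assumes "non_erasing \<sigma>" and "subshift X" and "\<nu> \<in> inv_measures (generated_subshift \<sigma> X)"
  shows "\<exists>\<mu>\<in>inv_measures X. push_measure \<sigma> X \<mu> = \<nu>"
proof -
  interpret inv_measure_lift \<sigma> X \<nu> using assms by unfold_locales
  show ?thesis using lift_in_inv_measures push_measure_lift by blast
qed

theorem proposition3:
  fixes \<sigma> :: "'a::finite \<Rightarrow> 'b::finite list"
    and X :: "(int \<Rightarrow> 'a) set"
  assumes "non_erasing \<sigma>" and "subshift X"
  shows "(\<forall>\<mu> \<in> inv_measures X.
            push_measure \<sigma> X \<mu> \<in> inv_measures (generated_subshift \<sigma> X) \<and>
            (\<forall>B \<in> sets shift_borel.
               emeasure (push_measure \<sigma> X \<mu>) B = (\<integral>\<^sup>+ x \<in> X. push_count \<sigma> B x \<partial>\<mu>)))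
       \<and> (\<forall>\<nu> \<in> inv_measures (generated_subshift \<sigma> X).
            \<exists>\<mu> \<in> inv_measures X. push_measure \<sigma> X \<mu> = \<nu>)
       \<and> (\<forall>(\<sigma>' :: 'c::finite \<Rightarrow> 'a list) (X' :: (int \<Rightarrow> 'c) set).
            non_erasing \<sigma>' \<longrightarrow> subshift X' \<longrightarrow> X = generated_subshift \<sigma>' X' \<longrightarrow>
            (\<forall>\<mu> \<in> inv_measures X'.
               push_measure (morph_comp \<sigma> \<sigma>') X' \<mu>
                 = push_measure \<sigma> X (push_measure \<sigma>' X' \<mu>)))"
  using push_measure_in_inv_measures[OF assms]
    emeasure_push_measure[OF inv_measuresD(1) assms(1) subshift_in_shift_borel[OF assms(2)]]
    push_measure_surj[OF assms] push_measure_morph_comp[OF assms(1)]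
  by blast

end
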